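(* Let $E,F\subset\mathbb{C}$ be compact and $K=E\times F\subset\mathbb{C}^2$. Let $a,b>0$ and let $C=T_{a,b}$ be the triangle with vertices $(0,0),(b,0),(0,a)$. Then $$-\log\delta_C(K)=\frac{ab}{a+b}\Big(\frac{-\log D(E)}{a}+\frac{-\log D(F)}{b}\Big),\quad\text{i.e.}\quad \delta_C(K)=D(E)^{b/(a+b)}D(F)^{a/(a+b)},$$ where $D(E),D(F)$ denote the univariate transfinite diameters (logarithmic capacities) of $E,F$.
   Context: For a convex body $C\subset(\mathbb{R}^+)^2$ and $n\ge1$, $\mathrm{Poly}(nC)$ is the span of the monomials $z^J$, $J\in nC\cap\mathbb{N}^2$, with dimension $d_n$ and monomials $z^{\alpha(j)}$, $j=1,\dots,d_n$. Let $V_n(K)=\max_{\zeta_1,\dots,\zeta_{d_n}\in K}|\det[\zeta_j^{\alpha(i)}]_{i,j=1}^{d_n}|$ and $l_n=\sum_{j=1}^{d_n}|\alpha(j)|$. The $C$-transfinite diameter is $\delta_C(K)=\limsup_n V_n(K)^{1/l_n}$ (known to be a limit). *)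

theory Defs
  imports "HOL-Analysis.Analysis"
begin

definition det_on :: "'i set \<Rightarrow> ('i \<Rightarrow> 'i \<Rightarrow> complex) \<Rightarrow> complex" where
  "det_on A M = (\<Sum>p\<in>{p. p permutes A}. of_int (sign p) * (\<Prod>i\<in>A. M i (p i)))"

definition exps :: "(real \<times> real) set \<Rightarrow> nat \<Rightarrow> (nat \<times> nat) set" where
  "exps C n = {J. (real (fst J), real (snd J)) \<in> (\<lambda>x. real n *\<^sub>R x) ` C}"

definition mono2 :: "nat \<times> nat \<Rightarrow> complex \<times> complex \<Rightarrow> complex" where
  "mono2 J z = fst z ^ fst J * snd z ^ snd J"

text \<open>V_n(K): maximal modulus of the Vandermonde determinant with points in K
  (points indexed by the multi-indices; sup with 0 only matters for empty K).\<close>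
definition Vn :: "(real \<times> real) set \<Rightarrow> (complex \<times> complex) set \<Rightarrow> nat \<Rightarrow> real" where
  "Vn C K n = Sup (insert 0 {cmod (det_on (exps C n) (\<lambda>I J. mono2 I (\<zeta> J))) | \<zeta>.
       \<forall>J\<in>exps C n. \<zeta> J \<in> K})"

definition ln_sum :: "(real \<times> real) set \<Rightarrow> nat \<Rightarrow> nat" where
  "ln_sum C n = (\<Sum>J\<in>exps C n. fst J + snd J)"

definition delta_C :: "(real \<times> real) set \<Rightarrow> (complex \<times> complex) set \<Rightarrow> real" where
  "delta_C C K = real_of_ereal (limsup (\<lambda>n. ereal (Vn C K n powr (1 / real (ln_sum C n)))))"

definition fekete_V :: "complex set \<Rightarrow> nat \<Rightarrow> real" where
  "fekete_V E n = Sup (insert 0 {(\<Prod>i<n. \<Prod>j\<in>{i<..<n}. cmod (z i - z j)) | z.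
       \<forall>i<n. z i \<in> E})"

definition transfinite_diameter :: "complex set \<Rightarrow> real" where
  "transfinite_diameter E =
     real_of_ereal (limsup (\<lambda>n. ereal (fekete_V E n powr (2 / (real n * (real n - 1))))))"

definition triangle :: "real \<Rightarrow> real \<Rightarrow> (real \<times> real) set" where
  "triangle a b = convex hull {(0,0), (b,0), (0,a)}"

end

theory Submission
  imports Defs "HOL-Combinatorics.Permutations" "HOL-Computational_Algebra.Polynomial"
    "HOL-Real_Asymp.Real_Asymp"
begin

text \<open>
  The exponent set of \<open>T\<^sub>a\<^sub>,\<^sub>b\<close> is downward closed, so a unitriangular change of
  basis replaces the rows \<open>z\<^sup>J\<close> of the Vandermonde matrix by products
  \<open>p\<^sub>i(z\<^sub>1) q\<^sub>j(z\<^sub>2)\<close> of monic polynomials of degrees \<open>i\<close> and \<open>j\<close>.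

  Upper bound: near-Fekete configurations give monic \<open>p\<^sub>i\<close>, \<open>q\<^sub>j\<close> bounded by
  \<open>C (D(E) + \<epsilon>)\<^sup>i\<close> on \<open>E\<close> and \<open>C (D(F) + \<epsilon>)\<^sup>j\<close> on \<open>F\<close>; expanding the determinant
  gives \<open>V\<^sub>n \<le> d\<^sub>n! K\<^bsup>d\<^sub>n\<^esup> (D(E) + \<epsilon>)\<^bsup>S1\<^esup> (D(F) + \<epsilon>)\<^bsup>S2\<^esup>\<close>, with \<open>d\<^sub>n\<close> the number
  of exponents and \<open>S1\<close>, \<open>S2\<close> the sums of the first and second coordinates of the
  lattice points of \<open>n T\<^sub>a\<^sub>,\<^sub>b\<close>.

  Lower bound: on a grid of Leja points the Newton polynomials make the matrix triangular,
  with diagonal entries at least \<open>D(E)\<^sup>i D(F)\<^sup>j\<close>, because a monic polynomial of degree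
  \<open>m\<close> has sup norm at least \<open>D\<^sup>m\<close> on the set (Chebyshev).

  Finally \<open>S1 \<sim> a b\<^sup>2 n\<^sup>3 / 6\<close>, \<open>S2 \<sim> a\<^sup>2 b n\<^sup>3 / 6\<close> and \<open>d\<^sub>n = O(n\<^sup>2)\<close>, so the
  \<open>l\<^sub>n = S1 + S2\<close>-th roots of both bounds tend to \<open>D(E)\<^bsup>b/(a+b)\<^esup> D(F)\<^bsup>a/(a+b)\<^esup>\<close>.
\<close>

section \<open>Determinants over a finite index set\<close>

lemma det_on_cong:
  assumes "\<And>I J. I \<in> A \<Longrightarrow> J \<in> A \<Longrightarrow> M I J = M' I J"
  shows "det_on A M = det_on A M'"
  unfolding det_on_def
proof (rule sum.cong[OF refl])
  fix p assume "p \<in> {p. p permutes A}"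
  then have "\<And>i. i \<in> A \<Longrightarrow> p i \<in> A" by (simp add: permutes_in_image)
  then show "of_int (sign p) * (\<Prod>i\<in>A. M i (p i)) = of_int (sign p) * (\<Prod>i\<in>A. M' i (p i))"
    using assms by (metis (no_types, lifting) prod.cong)
qed

lemma det_on_eq_0_if_rows_eq:
  assumes fin: "finite A" and "r \<in> A" "s \<in> A" "r \<noteq> s" and rows: "M r = M s"
  shows "det_on A M = 0"
proof -
  let ?t = "Transposition.transpose r s"
  let ?f = "\<lambda>p. of_int (sign p) * (\<Prod>i\<in>A. M i (p i))"
  have t: "?t permutes A" using assms by (intro permutes_swap_id)
  have "?f (p \<circ> ?t) = - ?f p" if p: "p permutes A" for p
  proof -
    have "permutation p" using p fin permutation_permutes by blast
    then have "sign (p \<circ> ?t) = - sign p"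
      using \<open>r \<noteq> s\<close> by (simp add: sign_compose permutation_swap_id sign_swap_id)
    moreover have "(\<Prod>i\<in>A. M i ((p \<circ> ?t) i)) = (\<Prod>i\<in>A. M i (p i))"
    proof -
      have "M (?t i) = M i" for i
        using rows by (cases "i = r"; cases "i = s") auto
      then have "(\<Prod>i\<in>A. M i ((p \<circ> ?t) i)) = (\<Prod>i\<in>A. M (?t i) (p (?t i)))"
        by simp
      also have "\<dots> = (\<Prod>i\<in>?t ` A. M i (p i))"
        using prod.reindex[of ?t A "\<lambda>i. M i (p i)"] by (simp add: o_def)
      also have "?t ` A = A" using t by (rule permutes_image)
      finally show ?thesis .
    qed
    ultimately show ?thesis by simp
  qed
  then have "det_on A M = - det_on A M"
    unfolding det_on_def
    using sum_permutations_compose_right[OF t, of ?f] by (simp add: sum_negf)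
  then show ?thesis by simp
qed

text \<open>The rank sum is invariant under the bijection, so the rank cannot drop anywhere.\<close>

lemma bij_betw_rank_decreasing_imp_id:
  fixes rk :: "'i \<Rightarrow> int"
  assumes fin: "finite A" and g: "bij_betw g A A"
    and rank: "\<And>I. I \<in> A \<Longrightarrow> g I \<noteq> I \<Longrightarrow> rk (g I) < rk I"
    and I: "I \<in> A"
  shows "g I = I"
proof (rule ccontr)
  assume "g I \<noteq> I"
  then have "sum (rk \<circ> g) A < sum rk A"
    using rank I by (intro sum_strict_mono_ex1[OF fin]) fastforce+
  moreover have "sum (rk \<circ> g) A = sum rk A"
    using sum.reindex_bij_betw[OF g, of rk] by (simp add: o_def)
  ultimately show False by simp
qed

lemma det_on_triangular:
  fixes rk :: "'i \<Rightarrow> int"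
  assumes fin: "finite A"
    and tri: "\<And>I J. I \<in> A \<Longrightarrow> J \<in> A \<Longrightarrow> M I J \<noteq> 0 \<Longrightarrow> I \<noteq> J \<Longrightarrow> rk I < rk J"
  shows "det_on A M = (\<Prod>I\<in>A. M I I)"
proof -
  let ?P = "{p. p permutes A}" and ?f = "\<lambda>p. of_int (sign p) * (\<Prod>i\<in>A. M i (p i))"
  have "?f p = 0" if p: "p \<in> ?P - {id}" for p
  proof (rule ccontr)
    assume "?f p \<noteq> 0"
    then have nz: "\<And>I. I \<in> A \<Longrightarrow> M I (p I) \<noteq> 0" using fin by auto
    have pA: "p permutes A" using p by simp
    have "p I = I" if "I \<in> A" for I
    proof (rule bij_betw_rank_decreasing_imp_id[OF fin permutes_imp_bij[OF pA] _ that])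
      fix I assume "I \<in> A" "p I \<noteq> I"
      then show "- rk (p I) < - rk I"
        using tri[OF _ _ nz] permutes_in_image[OF pA] by fastforce
    qed
    then have "p = id" using pA by (metis eq_id_iff permutes_not_in)
    with p show False by simp
  qed
  then have "sum ?f (?P - {id}) = 0" by (rule sum.neutral[OF ballI])
  then have "det_on A M = ?f id"
    unfolding det_on_def by (simp add: sum.remove[OF finite_permutations[OF fin], of id] permutes_id)
  then show ?thesis by simp
qed

lemma det_on_mult_expand:
  assumes fin: "finite A"
  shows "det_on A (\<lambda>I J. \<Sum>K\<in>A. U I K * M K J)
       = (\<Sum>g\<in>PiE A (\<lambda>_. A). (\<Prod>I\<in>A. U I (g I)) * det_on A (\<lambda>I. M (g I)))"
proof -
  let ?P = "{p. p permutes A}" and ?G = "PiE A (\<lambda>_. A)"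
  have "det_on A (\<lambda>I J. \<Sum>K\<in>A. U I K * M K J)
      = (\<Sum>p\<in>?P. of_int (sign p) * (\<Sum>g\<in>?G. \<Prod>I\<in>A. U I (g I) * M (g I) (p I)))"
    unfolding det_on_def using fin by (intro sum.cong refl) (simp add: prod_sum_PiE)
  also have "\<dots> = (\<Sum>p\<in>?P. \<Sum>g\<in>?G. (\<Prod>I\<in>A. U I (g I)) * (of_int (sign p) * (\<Prod>I\<in>A. M (g I) (p I))))"
    by (simp add: sum_distrib_left prod.distrib mult.left_commute)
  also have "\<dots> = (\<Sum>g\<in>?G. (\<Prod>I\<in>A. U I (g I)) * det_on A (\<lambda>I. M (g I)))"
    unfolding det_on_def by (subst sum.swap) (simp add: sum_distrib_left)
  finally show ?thesis .
qed

lemma det_on_unitriangular_mult: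
  fixes rk :: "'i \<Rightarrow> int"
  assumes fin: "finite A"
    and diag: "\<And>I. I \<in> A \<Longrightarrow> U I I = 1"
    and tri: "\<And>I K. I \<in> A \<Longrightarrow> K \<in> A \<Longrightarrow> U I K \<noteq> 0 \<Longrightarrow> K \<noteq> I \<Longrightarrow> rk K < rk I"
  shows "det_on A (\<lambda>I J. \<Sum>K\<in>A. U I K * M K J) = det_on A M"
proof -
  let ?G = "PiE A (\<lambda>_. A)" and ?F = "\<lambda>g. (\<Prod>I\<in>A. U I (g I)) * det_on A (\<lambda>I. M (g I))"
  define g0 where "g0 = restrict id A"
  have g0: "g0 \<in> ?G" unfolding g0_def by auto
  have finG: "finite ?G" using fin by (simp add: finite_PiE)
  have "?F g = 0" if g: "g \<in> ?G - {g0}" for g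
  proof (cases "inj_on g A")
    case False
    then obtain r s where "r \<in> A" "s \<in> A" "r \<noteq> s" "g r = g s"
      unfolding inj_on_def by blast
    then have "det_on A (\<lambda>I. M (g I)) = 0"
      using det_on_eq_0_if_rows_eq[OF fin, where M="\<lambda>I. M (g I)"] by auto
    then show ?thesis by simp
  next
    case True
    moreover have "g ` A \<subseteq> A" using g by auto
    ultimately have bij: "bij_betw g A A"
      by (simp add: bij_betw_def fin endo_inj_surj)
    show ?thesis
    proof (rule ccontr)
      assume "?F g \<noteq> 0"
      then have "\<And>I. I \<in> A \<Longrightarrow> U I (g I) \<noteq> 0" using fin by auto
      then have "\<And>I. I \<in> A \<Longrightarrow> g I = I"
        using bij_betw_rank_decreasing_imp_id[OF fin bij, of rk] tri g by blast
      then have "g = g0" using g unfolding g0_def by (auto simp: PiE_def extensional_def)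
      with g show False by simp
    qed
  qed
  then have "sum ?F (?G - {g0}) = 0" by (rule sum.neutral[OF ballI])
  then have "(\<Sum>g\<in>?G. ?F g) = ?F g0"
    by (simp add: sum.remove[OF finG g0])
  also have "?F g0 = det_on A M"
    unfolding g0_def using diag by (simp add: restrict_def det_on_def)
  finally show ?thesis using det_on_mult_expand[OF fin] by simp
qed

lemma norm_det_on_le:
  assumes fin: "finite A" and bound: "\<And>I J. I \<in> A \<Longrightarrow> J \<in> A \<Longrightarrow> cmod (M I J) \<le> B I"
  shows "cmod (det_on A M) \<le> fact (card A) * (\<Prod>I\<in>A. B I)"
proof -
  have "cmod (of_int (sign p) * (\<Prod>i\<in>A. M i (p i))) \<le> (\<Prod>I\<in>A. B I)" if p: "p permutes A" for p
  proof -
    have "cmod (of_int (sign p) * (\<Prod>i\<in>A. M i (p i))) = (\<Prod>i\<in>A. cmod (M i (p i)))"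
      by (cases rule: sign_cases[of p]) (simp_all add: norm_mult prod_norm)
    also have "\<dots> \<le> (\<Prod>I\<in>A. B I)"
      by (intro prod_mono) (use bound permutes_in_image[OF p] in auto)
    finally show ?thesis .
  qed
  then have "cmod (det_on A M) \<le> (\<Sum>p\<in>{p. p permutes A}. \<Prod>I\<in>A. B I)"
    unfolding det_on_def by (rule order_trans[OF norm_sum sum_mono]) simp
  also have "\<dots> = fact (card A) * (\<Prod>I\<in>A. B I)"
    by (simp add: card_permutations[OF refl fin])
  finally show ?thesis .
qed

section \<open>Vandermonde determinants\<close>

lemma poly_eq_sum_lessThan:
  fixes p :: "'a::comm_semiring_1 poly"
  assumes "degree p < N"
  shows "poly p z = (\<Sum>i<N. coeff p i * z ^ i)"
  unfolding poly_altdef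
  by (rule sum.mono_neutral_left) (use assms in \<open>auto intro: le_degree\<close>)

text \<open>A unitriangular change of basis of the rows.\<close>

lemma det_on_monic_rows:
  fixes P :: "nat \<Rightarrow> complex poly" and x :: "nat \<Rightarrow> complex"
  assumes monic: "\<And>j. j < N \<Longrightarrow> degree (P j) = j \<and> lead_coeff (P j) = 1"
  shows "det_on {..<N} (\<lambda>j k. poly (P j) (x k)) = det_on {..<N} (\<lambda>j k. x k ^ j)"
proof -
  have "det_on {..<N} (\<lambda>j k. poly (P j) (x k)) =
        det_on {..<N} (\<lambda>j k. \<Sum>i\<in>{..<N}. coeff (P j) i * x k ^ i)"
    using monic by (intro det_on_cong poly_eq_sum_lessThan) auto
  also have "\<dots> = det_on {..<N} (\<lambda>j k. x k ^ j)"
  proof (rule det_on_unitriangular_mult[where rk=int])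
    fix j assume "j \<in> {..<N}"
    then show "coeff (P j) j = 1" using monic by fastforce
  next
    fix j i assume "j \<in> {..<N}" "coeff (P j) i \<noteq> 0" "i \<noteq> j"
    then show "int i < int j" using monic[of j] le_degree[of "P j" i] by fastforce
  qed simp
  finally show ?thesis .
qed

definition newton_poly :: "(nat \<Rightarrow> 'a::idom) \<Rightarrow> nat \<Rightarrow> 'a poly" where
  "newton_poly x j = (\<Prod>l<j. [:- x l, 1:])"

lemma degree_newton_poly [simp]: "degree (newton_poly x j) = j"
  unfolding newton_poly_def by (subst degree_prod_sum_eq) auto

lemma coeff_newton_poly_degree [simp]: "coeff (newton_poly x j) j = 1"
  using lead_coeff_prod[of "\<lambda>l. [:- x l, 1:]" "{..<j}"]
  by (simp flip: newton_poly_def)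

lemma poly_newton_poly: "poly (newton_poly x j) z = (\<Prod>l<j. z - x l)"
  unfolding newton_poly_def poly_prod by simp

lemma prod_upper_triangle_swap:
  fixes f :: "nat \<Rightarrow> nat \<Rightarrow> 'a::comm_monoid_mult"
  shows   "(\<Prod>i<N. \<Prod>j\<in>{i<..<N}. f i j) = (\<Prod>j<N. \<Prod>i<j. f i j)"
proof (induction N)
  case (Suc N)
  have "{i<..<Suc N} = insert N {i<..<N}" if "i < N" for i
    using that by auto
  moreover have "{N<..<Suc N} = {}" by auto
  ultimately have "(\<Prod>i<Suc N. \<Prod>j\<in>{i<..<Suc N}. f i j) = (\<Prod>i<N. (\<Prod>j\<in>{i<..<N}. f i j) * f i N)"
    by (simp add: lessThan_Suc mult.commute)
  also have "\<dots> = (\<Prod>j<Suc N. \<Prod>i<j. f i j)"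
    by (simp add: prod.distrib Suc.IH)
  finally show ?case .
qed simp

text \<open>With the Newton basis of the nodes themselves the matrix becomes triangular.\<close>

lemma norm_det_on_vandermonde:
  fixes x :: "nat \<Rightarrow> complex"
  shows "cmod (det_on {..<N} (\<lambda>j k. x k ^ j)) = (\<Prod>i<N. \<Prod>j\<in>{i<..<N}. cmod (x i - x j))"
proof -
  have "det_on {..<N} (\<lambda>j k. x k ^ j) = det_on {..<N} (\<lambda>j k. poly (newton_poly x j) (x k))"
    by (rule det_on_monic_rows[symmetric]) simp
  also have "\<dots> = (\<Prod>j<N. poly (newton_poly x j) (x j))"
  proof (rule det_on_triangular[where rk=int])
    fix j k assume "poly (newton_poly x j) (x k) \<noteq> 0" "j \<noteq> k"
    then show "int j < int k" unfolding poly_newton_poly by (cases "k < j") auto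
  qed simp
  finally have "cmod (det_on {..<N} (\<lambda>j k. x k ^ j)) = (\<Prod>j<N. \<Prod>i<j. cmod (x i - x j))"
    by (simp add: poly_newton_poly prod_norm[symmetric] norm_minus_commute)
  also have "\<dots> = (\<Prod>i<N. \<Prod>j\<in>{i<..<N}. cmod (x i - x j))"
    by (rule prod_upper_triangle_swap[symmetric])
  finally show ?thesis .
qed

section \<open>Fekete products and the transfinite diameter\<close>

definition fekete_prod :: "(nat \<Rightarrow> complex) \<Rightarrow> nat \<Rightarrow> real" where
  "fekete_prod z n = (\<Prod>i<n. \<Prod>j\<in>{i<..<n}. cmod (z i - z j))"

definition nth_diameter :: "complex set \<Rightarrow> nat \<Rightarrow> real" where
  "nth_diameter E n = fekete_V E n powr (2 / (real n * (real n - 1)))"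

lemma fekete_V_eq_Sup:
  "fekete_V E n = Sup (insert 0 ((\<lambda>z. fekete_prod z n) ` {z. \<forall>i<n. z i \<in> E}))"
  unfolding fekete_V_def fekete_prod_def by (rule arg_cong[where f=Sup]) auto

lemma transfinite_diameter_eq_limsup:
  "transfinite_diameter E = real_of_ereal (limsup (\<lambda>n. ereal (nth_diameter E n)))"
  unfolding transfinite_diameter_def nth_diameter_def ..

lemma nth_diameter_nonneg: "0 \<le> nth_diameter E n"
  by (simp add: nth_diameter_def)

lemma fekete_prod_nonneg: "0 \<le> fekete_prod z n"
  by (simp add: fekete_prod_def prod_nonneg)

lemma card_pairs_lessThan: "2 * (\<Sum>i<n. card {i<..<n}) = n * (n - 1)"
proof (induction n)
  case (Suc n)
  have "(\<Sum>i<Suc n. card {i<..<Suc n}) = (\<Sum>i<n. n - i)" by simp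
  also have "\<dots> = (\<Sum>i<n. (n - Suc i) + 1)" by (rule sum.cong) auto
  also have "\<dots> = (\<Sum>i<n. card {i<..<n}) + n"
    by (subst sum.distrib) simp
  finally show ?case using Suc.IH by (cases n) (auto simp: algebra_simps)
qed simp

lemma fekete_prod_le:
  assumes z: "\<forall>i<n. z i \<in> E" and B: "\<And>u v. u \<in> E \<Longrightarrow> v \<in> E \<Longrightarrow> cmod (u - v) \<le> B"
  shows "fekete_prod z n \<le> B ^ (\<Sum>i<n. card {i<..<n})"
  unfolding fekete_prod_def power_sum
proof (intro prod_mono conjI)
  fix i assume "i \<in> {..<n}"
  then show "(\<Prod>j\<in>{i<..<n}. cmod (z i - z j)) \<le> B ^ card {i<..<n}"
    using prod_mono[of "{i<..<n}" "\<lambda>j. cmod (z i - z j)" "\<lambda>_. B"] z B by auto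
qed (simp add: prod_nonneg)

locale nonempty_compact =
  fixes E :: "complex set"
  assumes compact: "compact E" and nonempty: "E \<noteq> {}"
begin

abbreviation td :: real where "td \<equiv> transfinite_diameter E"

definition size_bound :: real where "size_bound = 2 * max 1 (SUP u\<in>E. cmod u)"

lemma size_bound_ge_1: "1 \<le> size_bound" and norm_le_size_bound: "u \<in> E \<Longrightarrow> cmod u \<le> size_bound"
  and norm_diff_le_size_bound: "u \<in> E \<Longrightarrow> v \<in> E \<Longrightarrow> cmod (u - v) \<le> size_bound"
proof -
  have bdd: "bdd_above (cmod ` E)"
    using compact_imp_bounded[OF compact] by (auto simp: bounded_iff bdd_above_def)
  have *: "w \<in> E \<Longrightarrow> cmod w \<le> max 1 (SUP u\<in>E. cmod u)" for w
    using cSUP_upper[OF _ bdd] by fastforce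
  show "1 \<le> size_bound" unfolding size_bound_def by simp
  show "u \<in> E \<Longrightarrow> cmod u \<le> size_bound" using *[of u] norm_ge_zero[of u] unfolding size_bound_def by linarith
  show "u \<in> E \<Longrightarrow> v \<in> E \<Longrightarrow> cmod (u - v) \<le> size_bound"
    using *[of u] *[of v] norm_triangle_ineq4[of u v] unfolding size_bound_def by linarith
qed

lemma bdd_above_fekete_prods: "bdd_above (insert 0 ((\<lambda>z. fekete_prod z n) ` {z. \<forall>i<n. z i \<in> E}))"
  using fekete_prod_le[where B=size_bound] norm_diff_le_size_bound size_bound_ge_1
  by (intro bdd_aboveI[where M="size_bound ^ (\<Sum>i<n. card {i<..<n})"]) auto

lemma fekete_V_nonneg: "0 \<le> fekete_V E n"
  unfolding fekete_V_eq_Sup by (rule cSup_upper[OF _ bdd_above_fekete_prods]) simp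

lemma fekete_prod_le_fekete_V: "\<forall>i<n. z i \<in> E \<Longrightarrow> fekete_prod z n \<le> fekete_V E n"
  unfolding fekete_V_eq_Sup by (rule cSup_upper[OF _ bdd_above_fekete_prods]) simp

lemma fekete_V_le: "fekete_V E n \<le> size_bound ^ (\<Sum>i<n. card {i<..<n})"
  unfolding fekete_V_eq_Sup
  using fekete_prod_le[where B=size_bound] norm_diff_le_size_bound size_bound_ge_1
  by (intro cSup_least) auto

lemma nth_diameter_le_size_bound: "nth_diameter E n \<le> size_bound"
proof (cases "n \<le> 1")
  case True
  then have "real n * (real n - 1) = 0" by (cases n) auto
  then have "nth_diameter E n = fekete_V E n powr 0" unfolding nth_diameter_def by (metis div_by_0)
  then show ?thesis using size_bound_ge_1 by simp
next
  case False
  let ?e = "2 / (real n * (real n - 1))"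
  define P where "P = (\<Sum>i<n. card {i<..<n})"
  have "real (2 * P) = real (n * (n - 1))"
    unfolding P_def card_pairs_lessThan ..
  then have "2 * real P = real n * (real n - 1)" using False by (simp add: of_nat_diff)
  then have e: "real P * ?e = 1" using False by (simp add: field_simps)
  have "nth_diameter E n \<le> (size_bound ^ P) powr ?e"
    unfolding nth_diameter_def P_def
    by (rule powr_mono2) (use False fekete_V_nonneg fekete_V_le in auto)
  also have "\<dots> = size_bound powr (real P * ?e)"
    using size_bound_ge_1 by (simp add: powr_realpow[symmetric] powr_powr)
  also have "\<dots> = size_bound" unfolding e using size_bound_ge_1 by simp
  finally show ?thesis .
qed

lemma limsup_nth_diameter: "limsup (\<lambda>n. ereal (nth_diameter E n)) = ereal td"
  and td_nonneg: "0 \<le> td"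
proof -
  let ?L = "limsup (\<lambda>n. ereal (nth_diameter E n))"
  have "?L \<le> ereal size_bound" by (rule Limsup_bounded) (simp add: nth_diameter_le_size_bound)
  moreover have "0 \<le> ?L"
    by (rule order_trans[OF Liminf_bounded Liminf_le_Limsup]) (simp_all add: nth_diameter_def)
  ultimately have L: "?L = ereal td"
    unfolding transfinite_diameter_eq_limsup by (cases ?L) auto
  then show "?L = ereal td" .
  show "0 \<le> td" using \<open>0 \<le> ?L\<close> L by simp
qed

lemma eventually_nth_diameter_less:
  "0 < \<epsilon> \<Longrightarrow> eventually (\<lambda>n. nth_diameter E n < td + \<epsilon>) sequentially"
  using Limsup_lessD[of sequentially "\<lambda>n. ereal (nth_diameter E n)" "ereal (td + \<epsilon>)"]
  by (simp add: limsup_nth_diameter)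

lemma td_le_lim:
  assumes "eventually (\<lambda>n. nth_diameter E n \<le> u n) sequentially" and "u \<longlonglongrightarrow> L"
  shows "td \<le> L"
proof -
  have "ereal td \<le> limsup (\<lambda>n. ereal (u n))"
    unfolding limsup_nth_diameter[symmetric]
    by (rule Limsup_mono) (use assms(1) in \<open>simp add: eventually_mono\<close>)
  also have "\<dots> = ereal L" by (rule lim_imp_Limsup) (use assms(2) in auto)
  finally show ?thesis by simp
qed

end

section \<open>Chebyshev's inequality\<close>

lemma monic_monom_mult_power:
  fixes p :: "'a::idom poly"
  assumes p: "degree p = m" "lead_coeff p = 1" and m: "1 \<le> m"
  shows "degree (monom 1 (j mod m) * p ^ (j div m)) = j"
    and "lead_coeff (monom 1 (j mod m) * p ^ (j div m)) = 1"
proof -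
  have "p \<noteq> 0" using p by auto
  then have "degree (monom 1 (j mod m) * p ^ (j div m)) = j mod m + j div m * m"
    by (simp add: degree_mult_eq degree_monom_eq degree_power_eq p)
  then show "degree (monom 1 (j mod m) * p ^ (j div m)) = j" by simp
  show "lead_coeff (monom 1 (j mod m) * p ^ (j div m)) = 1"
    by (simp only: lead_coeff_mult lead_coeff_power p(2) lead_coeff_monom) simp
qed

lemma tendsto_ln_fact_over_pairs: "(\<lambda>N. 2 / (real N * (real N - 1)) * ln (fact N)) \<longlonglongrightarrow> 0"
proof (rule real_tendsto_sandwich[where f="\<lambda>_. 0" and h="\<lambda>N. 2 * ln (real N) / (real N - 1)"])
  show "eventually (\<lambda>N. 2 / (real N * (real N - 1)) * ln (fact N) \<le> 2 * ln (real N) / (real N - 1))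
      sequentially"
    using eventually_ge_at_top[of 2]
  proof eventually_elim
    case (elim N)
    have "fact N \<le> (real (N ^ N))" by (rule fact_le_power)
    then have "ln (fact N) \<le> ln (real N ^ N)" by (subst ln_le_cancel_iff) auto
    also have "\<dots> = real N * ln (real N)" by (rule ln_realpow)
    finally have "2 / (real N * (real N - 1)) * ln (fact N)
        \<le> 2 / (real N * (real N - 1)) * (real N * ln (real N))"
      by (rule mult_left_mono) (use elim in simp)
    then show ?case using elim by simp
  qed
  show "(\<lambda>N. 2 * ln (real N) / (real N - 1)) \<longlonglongrightarrow> 0" by real_asymp
  show "eventually (\<lambda>N. 0 \<le> 2 / (real N * (real N - 1)) * ln (fact N)) sequentially"
    using eventually_ge_at_top[of 2] by eventually_elim simp
qed simp

lemma tendsto_sum_mod_over_pairs: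
  fixes m :: nat
  assumes m: "1 \<le> m"
  shows "(\<lambda>N. 2 / (real N * (real N - 1)) * real (\<Sum>j<N. j mod m)) \<longlonglongrightarrow> 0"
proof (rule real_tendsto_sandwich[where f="\<lambda>_. 0" and h="\<lambda>N. 2 * real m / (real N - 1)"])
  show "eventually (\<lambda>N. 2 / (real N * (real N - 1)) * real (\<Sum>j<N. j mod m) \<le> 2 * real m / (real N - 1))
      sequentially"
    using eventually_ge_at_top[of 2]
  proof eventually_elim
    case (elim N)
    have "(\<Sum>j<N. j mod m) \<le> N * m"
      using sum_mono[of "{..<N}" "\<lambda>j. j mod m" "\<lambda>_. m"] m by simp
    then have "real (\<Sum>j<N. j mod m) \<le> real (N * m)" by (simp only: of_nat_le_iff)
    then have "2 / (real N * (real N - 1)) * real (\<Sum>j<N. j mod m)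
        \<le> 2 / (real N * (real N - 1)) * (real N * real m)"
      by (intro mult_left_mono) (use elim in simp_all)
    then show ?case using elim by simp
  qed
  show "(\<lambda>N. 2 * real m / (real N - 1)) \<longlonglongrightarrow> 0" by real_asymp
  show "eventually (\<lambda>N. 0 \<le> 2 / (real N * (real N - 1)) * real (\<Sum>j<N. j mod m)) sequentially"
    using eventually_ge_at_top[of 2] by eventually_elim (intro mult_nonneg_nonneg; simp add: sum_nonneg)
qed simp

text \<open>Since \<open>\<Sum>j<N. j = m * (\<Sum>j<N. j div m) + (\<Sum>j<N. j mod m)\<close> and
  \<open>\<Sum>j<N. j = N (N - 1) / 2\<close>, this follows from the previous limit.\<close>

lemma tendsto_sum_div_over_pairs:
  fixes m :: nat
  assumes m: "1 \<le> m"
  shows "(\<lambda>N. 2 / (real N * (real N - 1)) * real (\<Sum>j<N. j div m)) \<longlonglongrightarrow> 1 / real m"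
proof -
  have "eventually (\<lambda>N. (1 - 2 / (real N * (real N - 1)) * real (\<Sum>j<N. j mod m)) / real m
                          = 2 / (real N * (real N - 1)) * real (\<Sum>j<N. j div m)) sequentially"
    using eventually_ge_at_top[of 2]
  proof eventually_elim
    case (elim N)
    define A where "A = real (\<Sum>j<N. j mod m)"
    define D where "D = real (\<Sum>j<N. j div m)"
    define T where "T = real N * (real N - 1)"
    have "(\<Sum>j<N. j) = (\<Sum>j<N. m * (j div m) + j mod m)" by simp
    then have "real (\<Sum>j<N. j) = real m * D + A"
      unfolding A_def D_def by (simp only: sum.distrib sum_distrib_left flip: of_nat_mult of_nat_add)
    moreover have "2 * real (\<Sum>j<N. j) = T"
      unfolding T_def by (induction N) (auto simp: algebra_simps)
    ultimately have "T - 2 * A = 2 * real m * D" by simp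
    moreover have "0 < T" using elim by (simp add: T_def)
    ultimately have "1 - 2 / T * A = 2 * real m * D / T" by (simp add: field_simps)
    then show ?case using m unfolding A_def[symmetric] D_def[symmetric] T_def[symmetric] by simp
  qed
  moreover have "(\<lambda>N. (1 - 2 / (real N * (real N - 1)) * real (\<Sum>j<N. j mod m)) / real m)
      \<longlonglongrightarrow> (1 - 0) / real m"
    by (intro tendsto_intros tendsto_sum_mod_over_pairs[OF m]) (use m in simp)
  ultimately show ?thesis by (simp add: Lim_transform_eventually)
qed

context nonempty_compact
begin

text \<open>Rows \<open>z^j\<close> of the Vandermonde matrix may be replaced by the monic rows
  \<open>z^(j mod m) * p(z)^(j div m)\<close>, which are bounded on \<open>E\<close>.\<close>

lemma fekete_V_le_monic_bound:
  fixes p :: "complex poly"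
  assumes p: "degree p = m" "lead_coeff p = 1" and m: "1 \<le> m"
    and c: "\<forall>z\<in>E. cmod (poly p z) \<le> c"
  shows "fekete_V E N \<le> fact N * size_bound ^ (\<Sum>j<N. j mod m) * c ^ (\<Sum>j<N. j div m)"
proof -
  have c0: "0 \<le> c" using c nonempty by (meson all_not_in_conv norm_ge_zero order_trans)
  let ?P = "\<lambda>j. monom 1 (j mod m) * p ^ (j div m)"
  show ?thesis unfolding fekete_V_eq_Sup
  proof (rule cSup_least)
    fix y assume "y \<in> insert 0 ((\<lambda>z. fekete_prod z N) ` {z. \<forall>i<N. z i \<in> E})"
    then consider "y = 0" | z where "\<forall>i<N. z i \<in> E" "y = fekete_prod z N" by blast
    then show "y \<le> fact N * size_bound ^ (\<Sum>j<N. j mod m) * c ^ (\<Sum>j<N. j div m)"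
    proof cases
      case 1 then show ?thesis using size_bound_ge_1 c0 by simp
    next
      case 2
      have "y = cmod (det_on {..<N} (\<lambda>j k. z k ^ j))"
        using 2 norm_det_on_vandermonde unfolding fekete_prod_def by simp
      also have "det_on {..<N} (\<lambda>j k. z k ^ j) = det_on {..<N} (\<lambda>j k. poly (?P j) (z k))"
        by (rule det_on_monic_rows[symmetric]) (use monic_monom_mult_power[OF p m] in blast)
      also have "cmod \<dots> \<le> fact (card {..<N}) * (\<Prod>j<N. size_bound ^ (j mod m) * c ^ (j div m))"
      proof (rule norm_det_on_le)
        fix j k assume "k \<in> {..<N}"
        then have "z k \<in> E" using 2 by simp
        then show "cmod (poly (?P j) (z k)) \<le> size_bound ^ (j mod m) * c ^ (j div m)"
          using c c0 size_bound_ge_1 norm_le_size_bound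
          by (auto simp: poly_monom norm_mult norm_power intro!: mult_mono power_mono)
      qed simp
      finally show ?thesis by (simp add: power_sum prod.distrib mult.assoc)
    qed
  qed simp
qed

lemma td_pow_le_sup_monic:
  fixes p :: "complex poly"
  assumes p: "degree p = m" "lead_coeff p = 1" and m: "1 \<le> m"
    and c: "\<forall>z\<in>E. cmod (poly p z) \<le> c"
  shows "td ^ m \<le> c"
proof -
  define e where "e = (\<lambda>N::nat. 2 / (real N * (real N - 1)))"
  define Sm where "Sm = (\<lambda>N. real (\<Sum>j<N. j mod m))"
  define Sd where "Sd = (\<lambda>N. real (\<Sum>j<N. j div m))"
  have td_le: "td \<le> c' powr (1 / real m)" if c': "c \<le> c'" "0 < c'" for c'
  proof (rule td_le_lim)
    let ?u = "\<lambda>N. exp (e N * ln (fact N) + e N * Sm N * ln size_bound + e N * Sd N * ln c')"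
    show "eventually (\<lambda>N. nth_diameter E N \<le> ?u N) sequentially"
    proof (intro always_eventually allI)
      fix N
      let ?W = "fact N * size_bound ^ (\<Sum>j<N. j mod m) * c' ^ (\<Sum>j<N. j div m)"
      have "fekete_V E N \<le> ?W"
        using fekete_V_le_monic_bound[OF p m, of c' N] c c' by force
      moreover have "0 \<le> real N * (real N - 1)" by (cases N) auto
      ultimately have "nth_diameter E N \<le> ?W powr e N"
        unfolding nth_diameter_def e_def using fekete_V_nonneg by (intro powr_mono2) auto
      also have "\<dots> = ?u N"
        using c' size_bound_ge_1
        by (simp add: powr_def ln_mult ln_realpow Sm_def Sd_def algebra_simps)
      finally show "nth_diameter E N \<le> ?u N" .
    qed
    have "?u \<longlonglongrightarrow> exp (0 + 0 * ln size_bound + 1 / real m * ln c')"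
      unfolding e_def Sm_def Sd_def using m
      by (intro tendsto_intros tendsto_ln_fact_over_pairs tendsto_sum_mod_over_pairs
          tendsto_sum_div_over_pairs) auto
    then show "?u \<longlonglongrightarrow> c' powr (1 / real m)"
      using c' by (simp add: powr_def)
  qed
  have td_pow_le: "td ^ m \<le> c'" if "c \<le> c'" "0 < c'" for c'
  proof -
    have "td ^ m \<le> (c' powr (1 / real m)) ^ m"
      using td_nonneg td_le[OF that] by (intro power_mono)
    also have "\<dots> = c'"
      using that m by (simp add: powr_realpow[symmetric] powr_powr)
    finally show ?thesis .
  qed
  have "0 \<le> c" using c nonempty by (meson all_not_in_conv norm_ge_zero order_trans)
  show ?thesis
  proof (rule field_le_epsilon)
    fix \<epsilon> :: real assume "0 < \<epsilon>"
    then show "td ^ m \<le> c + \<epsilon>" using td_pow_le[of "c + \<epsilon>"] \<open>0 \<le> c\<close> by simp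
  qed
qed

end

section \<open>Small monic polynomials and Leja points\<close>

lemma exists_pow_le_prod:
  fixes f :: "nat \<Rightarrow> real"
  assumes "0 < n" and "\<And>k. 0 \<le> f k"
  obtains k where "k < n" "f k ^ n \<le> (\<Prod>j<n. f j)"
proof -
  have "Min (f ` {..<n}) \<in> f ` {..<n}" using assms(1) by (intro Min_in) auto
  then obtain k where k: "k < n" "f k = Min (f ` {..<n})" by auto
  then have "f k \<le> f j" if "j < n" for j using that by simp
  then have "f k ^ n \<le> (\<Prod>j<n. f j)"
    using prod_mono[of "{..<n}" "\<lambda>_. f k" f] assms(2) by simp
  then show ?thesis using that k(1) by blast
qed

definition point_prod :: "(nat \<Rightarrow> complex) \<Rightarrow> nat \<Rightarrow> nat \<Rightarrow> real" where
  "point_prod y n k = (\<Prod>j\<in>{..<n} - {k}. cmod (y k - y j))"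

lemma fekete_prod_sq: "fekete_prod y n ^ 2 = (\<Prod>k<n. point_prod y n k)"
proof -
  let ?h = "\<lambda>i j. cmod (y i - y j)"
  have "point_prod y n k = (\<Prod>j<k. ?h k j) * (\<Prod>j\<in>{k<..<n}. ?h k j)" if "k < n" for k
  proof -
    have "{..<n} - {k} = {..<k} \<union> {k<..<n}" using that by auto
    then have "point_prod y n k = (\<Prod>j\<in>{..<k} \<union> {k<..<n}. ?h k j)"
      by (simp add: point_prod_def)
    also have "\<dots> = (\<Prod>j<k. ?h k j) * (\<Prod>j\<in>{k<..<n}. ?h k j)"
      by (rule prod.union_disjoint) auto
    finally show ?thesis .
  qed
  then have "(\<Prod>k<n. point_prod y n k) = (\<Prod>k<n. \<Prod>j<k. ?h j k) * (\<Prod>k<n. \<Prod>j\<in>{k<..<n}. ?h k j)"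
    by (simp add: prod.distrib norm_minus_commute)
  also have "\<dots> = fekete_prod y n * fekete_prod y n"
    unfolding fekete_prod_def by (simp add: prod_upper_triangle_swap)
  finally show ?thesis by (simp add: power2_eq_square)
qed

text \<open>The second factor does not involve the position \<open>y k\<close> of node \<open>k\<close>.\<close>

lemma fekete_prod_sq_split:
  assumes k: "k < n"
  shows "fekete_prod y n ^ 2 = point_prod y n k ^ 2
           * (\<Prod>i\<in>{..<n} - {k}. \<Prod>j\<in>{..<n} - {i, k}. cmod (y i - y j))"
proof -
  have "point_prod y n i = cmod (y k - y i) * (\<Prod>j\<in>{..<n} - {i, k}. cmod (y i - y j))"
    if "i \<in> {..<n} - {k}" for i
  proof -
    have "{..<n} - {i} = insert k ({..<n} - {i, k})" using that k by auto
    then show ?thesis unfolding point_prod_def by (simp add: norm_minus_commute)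
  qed
  then have "(\<Prod>i\<in>{..<n} - {k}. point_prod y n i)
      = point_prod y n k * (\<Prod>i\<in>{..<n} - {k}. \<Prod>j\<in>{..<n} - {i, k}. cmod (y i - y j))"
    unfolding point_prod_def[of y n k] by (simp add: prod.distrib)
  moreover have "(\<Prod>i<n. point_prod y n i) = point_prod y n k * (\<Prod>i\<in>{..<n} - {k}. point_prod y n i)"
    using k by (simp add: prod.remove)
  ultimately show ?thesis unfolding fekete_prod_sq by (simp add: power2_eq_square)
qed

lemma fekete_prod_pos: "inj_on x {..<n} \<Longrightarrow> 0 < fekete_prod x n"
  unfolding fekete_prod_def inj_on_def by (intro prod_pos) fastforce

lemma pow_le_mult_pow:
  fixes x :: "nat \<Rightarrow> real"
  assumes ev: "eventually (\<lambda>n. x n < q) sequentially" and q: "0 < q"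
    and x: "\<And>n. 0 \<le> x n" "\<And>n. x n \<le> R"
  obtains C where "1 \<le> C" "\<And>i. x (Suc i) ^ i \<le> C * q ^ i"
proof -
  obtain N0 where N0: "\<And>n. N0 \<le> n \<Longrightarrow> x n < q"
    using ev unfolding eventually_sequentially by blast
  define C where "C = max 1 R ^ N0 / min 1 q ^ N0"
  have pos: "0 < min 1 q ^ N0" and "min 1 q ^ N0 \<le> 1" using q by (auto intro: power_le_one)
  moreover have "1 \<le> max 1 R ^ N0" by simp
  ultimately have "min 1 q ^ N0 \<le> max 1 R ^ N0" by linarith
  then have C: "1 \<le> C" unfolding C_def le_divide_eq_1_pos[OF pos] .
  have "x (Suc i) ^ i \<le> C * q ^ i" for i
  proof (cases "N0 \<le> Suc i")
    case True
    then have "x (Suc i) ^ i \<le> q ^ i" using N0 x(1) by (intro power_mono) (auto simp: less_imp_le)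
    also have "\<dots> \<le> C * q ^ i" using mult_right_mono[OF C, of "q ^ i"] q by simp
    finally show ?thesis .
  next
    case False
    have "x (Suc i) ^ i \<le> max 1 R ^ i" using x by (intro power_mono) (auto simp: le_max_iff_disj)
    also have "\<dots> \<le> max 1 R ^ N0" using False by (intro power_increasing) auto
    also have "\<dots> = C * min 1 q ^ N0" using q by (simp add: C_def)
    also have "min 1 q ^ N0 \<le> q ^ i"
      using False q power_decreasing[of i N0 "min 1 q"] power_mono[of "min 1 q" q i] by auto
    then have "C * min 1 q ^ N0 \<le> C * q ^ i" using C by (intro mult_left_mono) auto
    finally show ?thesis .
  qed
  with C show ?thesis using that by blast
qed

context nonempty_compact
begin

lemma finite_if_fekete_V_eq_0:
  assumes "fekete_V E (Suc m) = 0"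
  shows "finite E" "card E \<le> m"
proof -
  have "finite E \<and> card E \<le> m"
  proof (rule ccontr)
    assume "\<not> (finite E \<and> card E \<le> m)"
    then obtain S where S: "finite S" "card S = Suc m" "S \<subseteq> E"
      by (metis infinite_arbitrarily_large not_less_eq_eq obtain_subset_with_card_n)
    obtain h where h: "bij_betw h {0..<Suc m} S"
      using ex_bij_betw_nat_finite[OF S(1)] S(2) by auto
    then have "inj_on h {..<Suc m}" "\<forall>i<Suc m. h i \<in> E"
      using S(3) unfolding bij_betw_def by (auto simp: atLeast0LessThan)
    then have "0 < fekete_V E (Suc m)"
      using fekete_prod_pos fekete_prod_le_fekete_V by (meson order_less_le_trans)
    with assms show False by simp
  qed
  then show "finite E" "card E \<le> m" by auto
qed

text \<open>Moving node \<open>k\<close> to \<open>w\<close> multiplies the squared Fekete product by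
  \<open>(\<Prod>j\<noteq>k. \<bar>w - x j\<bar>)\<^sup>2 / point_prod x n k\<^sup>2\<close>, which is at most 4 by \<open>near\<close>; and by
  \<open>kmin\<close>, \<open>point_prod x n k\<close> is at most the geometric mean of all the \<open>point_prod x n j\<close>.\<close>

lemma near_fekete_node_bound:
  assumes x: "\<forall>i<n. x i \<in> E" and near: "fekete_V E n \<le> 2 * fekete_prod x n"
    and pos: "0 < fekete_prod x n" and k: "k < n"
    and kmin: "point_prod x n k ^ n \<le> fekete_prod x n ^ 2" and w: "w \<in> E"
  shows "(\<Prod>j\<in>{..<n} - {k}. cmod (w - x j)) \<le> 2 * fekete_V E n powr (2 / real n)"
proof -
  let ?P = "fekete_prod x n" and ?y = "x(k := w)"
  define Rest where "Rest = (\<Prod>i\<in>{..<n} - {k}. \<Prod>j\<in>{..<n} - {i, k}. cmod (x i - x j))"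
  have Rest_y: "(\<Prod>i\<in>{..<n} - {k}. \<Prod>j\<in>{..<n} - {i, k}. cmod (?y i - ?y j)) = Rest"
    unfolding Rest_def by (intro prod.cong) auto
  have point_y: "point_prod ?y n k = (\<Prod>j\<in>{..<n} - {k}. cmod (w - x j))"
    unfolding point_prod_def by (intro prod.cong) auto
  have P_sq: "?P ^ 2 = point_prod x n k ^ 2 * Rest"
    unfolding Rest_def by (rule fekete_prod_sq_split[OF k])
  moreover have "0 \<le> Rest" unfolding Rest_def by (simp add: prod_nonneg)
  ultimately have "0 < Rest" using pos by (cases "Rest = 0") auto
  have y: "\<forall>i<n. ?y i \<in> E" using x w by simp
  have "fekete_prod ?y n \<le> 2 * ?P"
    using fekete_prod_le_fekete_V[OF y] near by linarith
  then have "fekete_prod ?y n ^ 2 \<le> (2 * ?P) ^ 2"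
    using fekete_prod_nonneg by (intro power_mono) auto
  then have "point_prod ?y n k ^ 2 * Rest \<le> (2 * point_prod x n k) ^ 2 * Rest"
    by (simp only: fekete_prod_sq_split[OF k, of ?y] Rest_y power_mult_distrib P_sq mult.assoc)
  then have "point_prod ?y n k ^ 2 \<le> (2 * point_prod x n k) ^ 2"
    using \<open>0 < Rest\<close> by simp
  then have "point_prod ?y n k \<le> 2 * point_prod x n k"
    by (rule power2_le_imp_le) (simp add: point_prod_def prod_nonneg)
  also have "point_prod x n k \<le> ?P powr (2 / real n)"
  proof -
    have "(?P powr (2 / real n)) ^ n = (?P powr (2 / real n)) powr real n"
      using pos by (simp add: powr_realpow)
    also have "\<dots> = ?P powr 2" using k by (simp add: powr_powr)
    also have "\<dots> = ?P ^ 2" using pos by simp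
    finally have "(?P powr (2 / real n)) ^ n = ?P ^ 2" .
    then show ?thesis
      using kmin k power_mono_iff[of "point_prod x n k" "?P powr (2 / real n)" n]
      by (simp add: point_prod_def prod_nonneg)
  qed
  also have "?P \<le> fekete_V E n" using x by (rule fekete_prod_le_fekete_V)
  then have "?P powr (2 / real n) \<le> fekete_V E n powr (2 / real n)"
    using pos by (intro powr_mono2) auto
  finally show ?thesis using point_y by simp
qed

lemma exists_monic_le_fekete_V:
  obtains t :: "complex poly" where "degree t = m" "lead_coeff t = 1"
    "\<And>z. z \<in> E \<Longrightarrow> cmod (poly t z) \<le> 2 * fekete_V E (Suc m) powr (2 / real (Suc m))"
proof (cases "fekete_V E (Suc m) = 0")
  case True
  note E = finite_if_fekete_V_eq_0[OF True]
  define t where "t = (\<Prod>e\<in>E. [:- e, 1:]) * monom 1 (m - card E)"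
  have "(\<Prod>e\<in>E. [:- e, 1:]) \<noteq> (0 :: complex poly)" using E by (simp add: prod_zero_iff)
  then have "degree t = card E + (m - card E)"
    unfolding t_def by (simp add: degree_mult_eq degree_prod_sum_eq degree_monom_eq E)
  then have "degree t = m" using E by simp
  moreover have "lead_coeff t = 1"
    unfolding t_def by (simp only: lead_coeff_mult lead_coeff_prod lead_coeff_monom) simp
  moreover have "poly t z = 0" if "z \<in> E" for z
    using E that by (simp add: t_def poly_prod prod_zero_iff)
  ultimately show ?thesis using that by simp
next
  case False
  let ?n = "Suc m" and ?V = "fekete_V E (Suc m)"
  have "0 < ?V" using False fekete_V_nonneg by (simp add: less_le)
  then have "\<exists>y\<in>insert 0 ((\<lambda>z. fekete_prod z ?n) ` {z. \<forall>i<?n. z i \<in> E}). ?V / 2 < y"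
    by (intro less_cSupD) (auto simp: fekete_V_eq_Sup)
  then obtain x where x: "\<forall>i<?n. x i \<in> E" and near: "?V / 2 < fekete_prod x ?n"
    using \<open>0 < ?V\<close> by auto
  have pos: "0 < fekete_prod x ?n" using near \<open>0 < ?V\<close> by linarith
  obtain k where k: "k < ?n" "point_prod x ?n k ^ ?n \<le> fekete_prod x ?n ^ 2"
    using exists_pow_le_prod[of ?n "point_prod x ?n"] by (auto simp: fekete_prod_sq point_prod_def prod_nonneg)
  define t where "t = (\<Prod>j\<in>{..<?n} - {k}. [:- x j, 1:])"
  have "degree t = m" using k unfolding t_def by (subst degree_prod_sum_eq) auto
  moreover have "lead_coeff t = 1" unfolding t_def by (simp only: lead_coeff_prod) simp
  moreover have "cmod (poly t z) \<le> 2 * ?V powr (2 / real ?n)" if "z \<in> E" for z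
    using near_fekete_node_bound[OF x _ pos k that] near
    by (simp add: t_def poly_prod prod_norm)
  ultimately show ?thesis using that by blast
qed

lemma leja_points_exist:
  "\<exists>x. \<forall>i\<le>(M::nat). x i \<in> E \<and> (\<forall>w\<in>E. (\<Prod>k<i. cmod (w - x k)) \<le> (\<Prod>k<i. cmod (x i - x k)))"
proof (induction M)
  case 0
  obtain e where "e \<in> E" using nonempty by blast
  then show ?case by (intro exI[of _ "\<lambda>_. e"]) auto
next
  case (Suc M)
  then obtain x where x: "\<forall>i\<le>M. x i \<in> E \<and> (\<forall>w\<in>E. (\<Prod>k<i. cmod (w - x k)) \<le> (\<Prod>k<i. cmod (x i - x k)))"
    by blast
  have "continuous_on E (\<lambda>w. \<Prod>k<Suc M. cmod (w - x k))"
    by (intro continuous_intros)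
  then obtain z where z: "z \<in> E" "\<forall>w\<in>E. (\<Prod>k<Suc M. cmod (w - x k)) \<le> (\<Prod>k<Suc M. cmod (z - x k))"
    using continuous_attains_sup[OF compact nonempty] by blast
  have same: "(\<Prod>k<i. cmod (w - (x(Suc M := z)) k)) = (\<Prod>k<i. cmod (w - x k))" if "i \<le> Suc M" for i w
    using that by (intro prod.cong) auto
  show ?case
    by (rule exI[of _ "x(Suc M := z)"]) (use x z same in \<open>auto simp: le_Suc_eq\<close>)
qed

lemma leja_points_td:
  obtains x where "\<And>i. i \<le> M \<Longrightarrow> x i \<in> E"
    "\<And>i. i \<le> M \<Longrightarrow> td ^ i \<le> (\<Prod>k<i. cmod (x i - x k))"
proof -
  obtain x where x: "\<forall>i\<le>M. x i \<in> E \<and> (\<forall>w\<in>E. (\<Prod>k<i. cmod (w - x k)) \<le> (\<Prod>k<i. cmod (x i - x k)))"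
    using leja_points_exist by blast
  have "td ^ i \<le> (\<Prod>k<i. cmod (x i - x k))" if "i \<le> M" for i
  proof (cases "i = 0")
    case False
    then show ?thesis
      using td_pow_le_sup_monic[of "newton_poly x i" i] x that
      by (simp add: poly_newton_poly prod_norm[symmetric])
  qed simp
  with x that show ?thesis by blast
qed

lemma exists_monic_le_td_plus:
  assumes "0 < \<epsilon>"
  obtains C P where "1 \<le> C" "\<And>i. degree (P i) = i" "\<And>i. lead_coeff (P i) = (1 :: complex)"
    "\<And>i z. z \<in> E \<Longrightarrow> cmod (poly (P i) z) \<le> C * (td + \<epsilon>) ^ i"
proof -
  define q where "q = td + \<epsilon>"
  have q: "0 < q" using assms td_nonneg by (simp add: q_def)
  obtain C where C: "1 \<le> C" "\<And>i. nth_diameter E (Suc i) ^ i \<le> C * q ^ i"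
    using pow_le_mult_pow[OF eventually_nth_diameter_less[OF assms, folded q_def] q
        nth_diameter_nonneg nth_diameter_le_size_bound]
    by blast
  have root: "fekete_V E (Suc i) powr (2 / real (Suc i)) = nth_diameter E (Suc i) ^ i"
    if "0 < i" for i
  proof (cases "fekete_V E (Suc i) = 0")
    case False
    then have "0 < fekete_V E (Suc i)" using fekete_V_nonneg[of "Suc i"] by simp
    then show ?thesis
      using that by (simp add: nth_diameter_def powr_realpow[symmetric] powr_powr)
  qed (use that in \<open>simp add: nth_diameter_def\<close>)
  have "\<forall>i. \<exists>t. degree t = i \<and> lead_coeff t = 1 \<and> (\<forall>z\<in>E. cmod (poly t z) \<le> 2 * C * q ^ i)"
  proof
    fix i :: nat
    show "\<exists>t. degree t = i \<and> lead_coeff t = 1 \<and> (\<forall>z\<in>E. cmod (poly t z) \<le> 2 * C * q ^ i)"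
    proof (cases "i = 0")
      case True
      then show ?thesis using C by (intro exI[of _ 1]) auto
    next
      case False
      obtain t where t: "degree t = i" "lead_coeff t = 1"
        "\<And>z. z \<in> E \<Longrightarrow> cmod (poly t z) \<le> 2 * fekete_V E (Suc i) powr (2 / real (Suc i))"
        using exists_monic_le_fekete_V[where m=i] by blast
      have "2 * fekete_V E (Suc i) powr (2 / real (Suc i)) \<le> 2 * C * q ^ i"
        using C(2)[of i] root[of i] False by simp
      then have "cmod (poly t z) \<le> 2 * C * q ^ i" if "z \<in> E" for z
        using t(3)[OF that] by linarith
      then show ?thesis using t(1,2) by (intro exI[of _ t]) simp
    qed
  qed
  then obtain P where "\<forall>i. degree (P i) = i \<and> lead_coeff (P i) = 1 \<and> (\<forall>z\<in>E. cmod (poly (P i) z) \<le> 2 * C * q ^ i)"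
    by (auto dest: choice)
  moreover have "1 \<le> 2 * C" using C by simp
  ultimately show ?thesis unfolding q_def using that by blast
qed
end

section \<open>Lattice points of the triangle\<close>

definition triangle_points :: "real \<Rightarrow> real \<Rightarrow> nat \<Rightarrow> (nat \<times> nat) set" where
  "triangle_points a b n = {J. a * real (fst J) + b * real (snd J) \<le> a * b * real n}"

lemma triangle_eq:
  assumes a: "0 < a" and b: "0 < b"
  shows "triangle a b = {p. 0 \<le> fst p \<and> 0 \<le> snd p \<and> a * fst p + b * snd p \<le> a * b}"
proof -
  have "triangle a b = {u *\<^sub>R (0,0) + v *\<^sub>R (b,0) + w *\<^sub>R (0,a) | u v w.
          0 \<le> u \<and> 0 \<le> v \<and> 0 \<le> w \<and> u + v + w = (1::real)}"
    unfolding triangle_def by (rule convex_hull_3)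
  also have "\<dots> = {p. 0 \<le> fst p \<and> 0 \<le> snd p \<and> a * fst p + b * snd p \<le> a * b}"
  proof (intro set_eqI iffI)
    fix p assume "p \<in> {u *\<^sub>R (0,0) + v *\<^sub>R (b,0) + w *\<^sub>R (0,a) | u v w.
          0 \<le> u \<and> 0 \<le> v \<and> 0 \<le> w \<and> u + v + w = (1::real)}"
    then obtain u v w where uvw: "0 \<le> u" "0 \<le> v" "0 \<le> w" "u + v + w = 1"
      and p: "p = (v * b, w * a)" by auto
    have "a * (v * b) + b * (w * a) = a * b * (v + w)" by (simp add: algebra_simps)
    also have "\<dots> \<le> a * b" using uvw a b by (simp add: mult_left_le)
    finally show "p \<in> {p. 0 \<le> fst p \<and> 0 \<le> snd p \<and> a * fst p + b * snd p \<le> a * b}"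
      using p uvw a b by simp
  next
    fix p assume "p \<in> {p. 0 \<le> fst p \<and> 0 \<le> snd p \<and> a * fst p + b * snd p \<le> a * b}"
    then have p: "0 \<le> fst p" "0 \<le> snd p" "a * fst p + b * snd p \<le> a * b" by auto
    define v where "v = fst p / b"
    define w where "w = snd p / a"
    have "v + w = (a * fst p + b * snd p) / (a * b)"
      unfolding v_def w_def using a b by (simp add: field_simps)
    also have "\<dots> \<le> 1" using p a b by simp
    finally have "0 \<le> 1 - v - w" by simp
    moreover have "0 \<le> v" "0 \<le> w" unfolding v_def w_def using p a b by auto
    moreover have "p = (1 - v - w) *\<^sub>R (0,0) + v *\<^sub>R (b,0) + w *\<^sub>R (0,a)"
      unfolding v_def w_def using a b by (simp add: prod_eq_iff)
    ultimately show "p \<in> {u *\<^sub>R (0,0) + v *\<^sub>R (b,0) + w *\<^sub>R (0,a) | u v w.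
          0 \<le> u \<and> 0 \<le> v \<and> 0 \<le> w \<and> u + v + w = (1::real)}"
      by (intro CollectI exI[of _ "1 - v - w"] exI[of _ v] exI[of _ w]) auto
  qed
  finally show ?thesis .
qed

lemma exps_triangle:
  assumes a: "0 < a" and b: "0 < b"
  shows "exps (triangle a b) n = triangle_points a b n"
proof (intro set_eqI iffI)
  fix J assume "J \<in> exps (triangle a b) n"
  then obtain p where p: "p \<in> triangle a b" "(real (fst J), real (snd J)) = real n *\<^sub>R p"
    unfolding exps_def by blast
  have "a * fst p + b * snd p \<le> a * b" using p(1) triangle_eq[OF a b] by auto
  then have "real n * (a * fst p + b * snd p) \<le> real n * (a * b)" by (intro mult_left_mono) auto
  then show "J \<in> triangle_points a b n"
    using p(2) by (auto simp: triangle_points_def prod_eq_iff algebra_simps)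
next
  fix J assume J: "J \<in> triangle_points a b n"
  then have h: "a * real (fst J) + b * real (snd J) \<le> a * b * real n"
    unfolding triangle_points_def by simp
  show "J \<in> exps (triangle a b) n"
  proof (cases "n = 0")
    case True
    then have "a * real (fst J) + b * real (snd J) \<le> 0" using h by simp
    moreover have "0 \<le> a * real (fst J)" "0 \<le> b * real (snd J)" using a b by auto
    ultimately have "a * real (fst J) = 0" "b * real (snd J) = 0" by linarith+
    then have "fst J = 0" "snd J = 0" using a b by auto
    moreover have "(0::real, 0::real) \<in> triangle a b" using triangle_eq[OF a b] a b by auto
    ultimately show ?thesis unfolding exps_def using True by (auto simp: image_iff prod_eq_iff)
  next
    case False
    define p where "p = (real (fst J) / real n, real (snd J) / real n)"
    have "a * fst p + b * snd p = (a * real (fst J) + b * real (snd J)) / real n"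
      unfolding p_def using False by (simp add: field_simps)
    also have "\<dots> \<le> a * b" using h False by (simp add: field_simps)
    finally have "p \<in> triangle a b" using triangle_eq[OF a b] unfolding p_def by auto
    moreover have "(real (fst J), real (snd J)) = real n *\<^sub>R p" unfolding p_def using False by simp
    ultimately show ?thesis unfolding exps_def by blast
  qed
qed

lemma triangle_points_bounds:
  assumes a: "0 < a" and b: "0 < b" and J: "J \<in> triangle_points a b n"
  shows "real (fst J) \<le> b * real n" "real (snd J) \<le> a * real n"
proof -
  have h: "a * real (fst J) + b * real (snd J) \<le> a * (b * real n)"
    "a * real (fst J) + b * real (snd J) \<le> b * (a * real n)"
    using J unfolding triangle_points_def by (simp_all add: mult_ac)
  have "0 \<le> a * real (fst J)" "0 \<le> b * real (snd J)" using a b by simp_all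
  then have "a * real (fst J) \<le> a * (b * real n)" "b * real (snd J) \<le> b * (a * real n)"
    using h by linarith+
  then show "real (fst J) \<le> b * real n" "real (snd J) \<le> a * real n" using a b by simp_all
qed

lemma triangle_points_subset:
  assumes "0 < a" "0 < b"
  shows "triangle_points a b n \<subseteq> {..nat \<lceil>b * real n\<rceil>} \<times> {..nat \<lceil>a * real n\<rceil>}"
proof
  fix J assume "J \<in> triangle_points a b n"
  then have "real (fst J) \<le> b * real n" "real (snd J) \<le> a * real n"
    using triangle_points_bounds[OF assms] by auto
  then have "fst J \<le> nat \<lceil>b * real n\<rceil>" "snd J \<le> nat \<lceil>a * real n\<rceil>" by linarith+
  then show "J \<in> {..nat \<lceil>b * real n\<rceil>} \<times> {..nat \<lceil>a * real n\<rceil>}" by (cases J) auto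
qed

lemma finite_triangle_points: "0 < a \<Longrightarrow> 0 < b \<Longrightarrow> finite (triangle_points a b n)"
  using triangle_points_subset by (rule finite_subset) auto

lemma zero_in_triangle_points: "0 < a \<Longrightarrow> 0 < b \<Longrightarrow> (0, 0) \<in> triangle_points a b n"
  by (simp add: triangle_points_def)

lemma triangle_points_downward_closed:
  assumes "0 < a" "0 < b" "I \<in> triangle_points a b n" "fst K \<le> fst I" "snd K \<le> snd I"
  shows "K \<in> triangle_points a b n"
proof -
  have "a * real (fst K) + b * real (snd K) \<le> a * real (fst I) + b * real (snd I)"
    using assms by (intro add_mono mult_left_mono) auto
  then show ?thesis using assms(3) unfolding triangle_points_def by simp
qed

section \<open>Bivariate Vandermonde determinants\<close>

lemma poly_mult_poly_eq_sum_mono2: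
  assumes fin: "finite A" and box: "{..degree p} \<times> {..degree q} \<subseteq> A"
  shows "poly p (fst z) * poly q (snd z) = (\<Sum>K\<in>A. coeff p (fst K) * coeff q (snd K) * mono2 K z)"
proof -
  let ?box = "{..degree p} \<times> {..degree q}"
  have "(\<Sum>K\<in>A. coeff p (fst K) * coeff q (snd K) * mono2 K z)
      = (\<Sum>K\<in>?box. coeff p (fst K) * coeff q (snd K) * mono2 K z)"
  proof (rule sum.mono_neutral_right[OF fin box], rule ballI)
    fix K assume "K \<in> A - ?box"
    then have "coeff p (fst K) = 0 \<or> coeff q (snd K) = 0"
      using coeff_eq_0[of p "fst K"] coeff_eq_0[of q "snd K"] by (cases K) auto
    then show "coeff p (fst K) * coeff q (snd K) * mono2 K z = 0" by auto
  qed
  also have "\<dots> = (\<Sum>k\<le>degree p. \<Sum>l\<le>degree q. coeff p k * coeff q l * mono2 (k, l) z)"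
    by (subst sum.cartesian_product) (simp add: case_prod_unfold)
  also have "\<dots> = (\<Sum>k\<le>degree p. coeff p k * fst z ^ k) * (\<Sum>l\<le>degree q. coeff q l * snd z ^ l)"
    unfolding sum_product mono2_def by (intro sum.cong refl) (simp add: mult_ac)
  finally show ?thesis by (simp add: poly_altdef)
qed

lemma det_on_monic_product_rows:
  fixes P Q :: "nat \<Rightarrow> complex poly" and \<zeta> :: "nat \<times> nat \<Rightarrow> complex \<times> complex"
  assumes fin: "finite A"
    and down: "\<And>I K. I \<in> A \<Longrightarrow> fst K \<le> fst I \<Longrightarrow> snd K \<le> snd I \<Longrightarrow> K \<in> A"
    and P: "\<And>i. degree (P i) = i" "\<And>i. lead_coeff (P i) = 1"
    and Q: "\<And>j. degree (Q j) = j" "\<And>j. lead_coeff (Q j) = 1"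
  shows "det_on A (\<lambda>I J. poly (P (fst I)) (fst (\<zeta> J)) * poly (Q (snd I)) (snd (\<zeta> J)))
       = det_on A (\<lambda>I J. mono2 I (\<zeta> J))"
proof -
  let ?U = "\<lambda>I K. coeff (P (fst I)) (fst K) * coeff (Q (snd I)) (snd K)"
  have "{..degree (P (fst I))} \<times> {..degree (Q (snd I))} \<subseteq> A" if "I \<in> A" for I
    using down[OF that] P(1) Q(1) by auto
  then have "det_on A (\<lambda>I J. poly (P (fst I)) (fst (\<zeta> J)) * poly (Q (snd I)) (snd (\<zeta> J)))
      = det_on A (\<lambda>I J. \<Sum>K\<in>A. ?U I K * mono2 K (\<zeta> J))"
    by (intro det_on_cong poly_mult_poly_eq_sum_mono2[OF fin]) auto
  also have "\<dots> = det_on A (\<lambda>I J. mono2 I (\<zeta> J))"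
  proof (rule det_on_unitriangular_mult[OF fin, where rk="\<lambda>K. int (fst K + snd K)"])
    fix I assume "I \<in> A"
    show "?U I I = 1" using P(2)[of "fst I"] Q(2)[of "snd I"] by (simp add: P(1) Q(1))
  next
    fix I K assume "?U I K \<noteq> 0" "K \<noteq> I"
    then have "fst K \<le> fst I" "snd K \<le> snd I" using le_degree P(1) Q(1) by (metis mult_eq_0_iff)+
    with \<open>K \<noteq> I\<close> show "int (fst K + snd K) < int (fst I + snd I)" by (cases K, cases I) auto
  qed
  finally show ?thesis .
qed

section \<open>Bounds for the Vandermonde maxima of a product set\<close>

definition fst_sum :: "real \<Rightarrow> real \<Rightarrow> nat \<Rightarrow> nat" where
  "fst_sum a b n = (\<Sum>J\<in>triangle_points a b n. fst J)"

definition snd_sum :: "real \<Rightarrow> real \<Rightarrow> nat \<Rightarrow> nat" where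
  "snd_sum a b n = (\<Sum>J\<in>triangle_points a b n. snd J)"

lemma ln_sum_triangle:
  "0 < a \<Longrightarrow> 0 < b \<Longrightarrow> ln_sum (triangle a b) n = fst_sum a b n + snd_sum a b n"
  unfolding ln_sum_def exps_triangle fst_sum_def snd_sum_def by (rule sum.distrib)

locale compact_product = E: nonempty_compact E + F: nonempty_compact F for E F +
  fixes a b :: real
  assumes a: "0 < a" and b: "0 < b"
begin

abbreviation T :: "nat \<Rightarrow> (nat \<times> nat) set" where "T \<equiv> triangle_points a b"

lemma finite_T: "finite (T n)"
  using finite_triangle_points[OF a b] .

lemma Vn_eq_Sup:
  "Vn (triangle a b) (E \<times> F) n = Sup (insert 0 ((\<lambda>\<zeta>. cmod (det_on (T n) (\<lambda>I J. mono2 I (\<zeta> J))))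
     ` {\<zeta>. \<forall>J\<in>T n. \<zeta> J \<in> E \<times> F}))"
  unfolding Vn_def exps_triangle[OF a b] by (rule arg_cong[where f=Sup]) auto

text \<open>Rows are replaced by products of monic polynomials that are nearly optimal on \<open>E\<close>
  and on \<open>F\<close>.\<close>

lemma norm_det_le:
  assumes "0 < \<epsilon>"
  obtains K where "1 \<le> K" "\<And>n \<zeta>. \<forall>J\<in>T n. \<zeta> J \<in> E \<times> F \<Longrightarrow>
     cmod (det_on (T n) (\<lambda>I J. mono2 I (\<zeta> J))) \<le>
       fact (card (T n)) * K ^ card (T n) * (E.td + \<epsilon>) ^ fst_sum a b n * (F.td + \<epsilon>) ^ snd_sum a b n"
proof -
  obtain C1 P where C1: "1 \<le> C1" and P: "\<And>i. degree (P i) = i" "\<And>i. lead_coeff (P i) = 1"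
    "\<And>i z. z \<in> E \<Longrightarrow> cmod (poly (P i) z) \<le> C1 * (E.td + \<epsilon>) ^ i"
    using E.exists_monic_le_td_plus[OF assms] by blast
  obtain C2 Q where C2: "1 \<le> C2" and Q: "\<And>i. degree (Q i) = i" "\<And>i. lead_coeff (Q i) = 1"
    "\<And>i z. z \<in> F \<Longrightarrow> cmod (poly (Q i) z) \<le> C2 * (F.td + \<epsilon>) ^ i"
    using F.exists_monic_le_td_plus[OF assms] by blast
  have qE: "0 \<le> E.td + \<epsilon>" and qF: "0 \<le> F.td + \<epsilon>"
    using E.td_nonneg F.td_nonneg assms by auto
  have "cmod (det_on (T n) (\<lambda>I J. mono2 I (\<zeta> J))) \<le>
       fact (card (T n)) * (C1 * C2) ^ card (T n) * (E.td + \<epsilon>) ^ fst_sum a b n * (F.td + \<epsilon>) ^ snd_sum a b n"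
    if \<zeta>: "\<forall>J\<in>T n. \<zeta> J \<in> E \<times> F" for n \<zeta>
  proof -
    have "det_on (T n) (\<lambda>I J. mono2 I (\<zeta> J)) =
          det_on (T n) (\<lambda>I J. poly (P (fst I)) (fst (\<zeta> J)) * poly (Q (snd I)) (snd (\<zeta> J)))"
      using triangle_points_downward_closed[OF a b]
      by (intro det_on_monic_product_rows[symmetric, OF finite_T _ P(1,2) Q(1,2)]) blast
    also have "cmod \<dots> \<le> fact (card (T n)) * (\<Prod>I\<in>T n. (C1 * (E.td + \<epsilon>) ^ fst I) * (C2 * (F.td + \<epsilon>) ^ snd I))"
    proof (rule norm_det_on_le[OF finite_T])
      fix I J assume "J \<in> T n"
      then have "fst (\<zeta> J) \<in> E" "snd (\<zeta> J) \<in> F" using \<zeta> by auto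
      then show "cmod (poly (P (fst I)) (fst (\<zeta> J)) * poly (Q (snd I)) (snd (\<zeta> J)))
          \<le> (C1 * (E.td + \<epsilon>) ^ fst I) * (C2 * (F.td + \<epsilon>) ^ snd I)"
        unfolding norm_mult using C1 qE by (intro mult_mono P(3) Q(3)) auto
    qed
    also have "(\<Prod>I\<in>T n. (C1 * (E.td + \<epsilon>) ^ fst I) * (C2 * (F.td + \<epsilon>) ^ snd I))
        = (C1 * C2) ^ card (T n) * (E.td + \<epsilon>) ^ fst_sum a b n * (F.td + \<epsilon>) ^ snd_sum a b n"
      unfolding fst_sum_def snd_sum_def power_sum prod.distrib power_mult_distrib by (simp add: mult_ac)
    finally show ?thesis by (simp add: mult.assoc)
  qed
  moreover have "1 \<le> C1 * C2" using C1 C2 by (metis mult_mono' mult_1 zero_le_one)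
  ultimately show ?thesis using that by blast
qed

lemma Vn_le:
  assumes "0 < \<epsilon>"
  obtains K where "1 \<le> K" "\<And>n. Vn (triangle a b) (E \<times> F) n \<le>
       fact (card (T n)) * K ^ card (T n) * (E.td + \<epsilon>) ^ fst_sum a b n * (F.td + \<epsilon>) ^ snd_sum a b n"
proof -
  obtain K where K: "1 \<le> K" "\<And>n \<zeta>. \<forall>J\<in>T n. \<zeta> J \<in> E \<times> F \<Longrightarrow>
     cmod (det_on (T n) (\<lambda>I J. mono2 I (\<zeta> J))) \<le>
       fact (card (T n)) * K ^ card (T n) * (E.td + \<epsilon>) ^ fst_sum a b n * (F.td + \<epsilon>) ^ snd_sum a b n"
    using norm_det_le[OF assms] by blast
  have "0 \<le> E.td + \<epsilon>" "0 \<le> F.td + \<epsilon>" using E.td_nonneg F.td_nonneg assms by auto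
  then have "Vn (triangle a b) (E \<times> F) n \<le>
       fact (card (T n)) * K ^ card (T n) * (E.td + \<epsilon>) ^ fst_sum a b n * (F.td + \<epsilon>) ^ snd_sum a b n" for n
    unfolding Vn_eq_Sup using K by (intro cSup_least) auto
  with K(1) show ?thesis using that by blast
qed

text \<open>On a grid of Leja points the Newton bases of the two coordinates make the matrix
  triangular, and each diagonal entry is bounded below by Chebyshev's inequality.\<close>

lemma Vn_ge: "E.td ^ fst_sum a b n * F.td ^ snd_sum a b n \<le> Vn (triangle a b) (E \<times> F) n"
proof -
  define M where "M = nat \<lceil>a * real n\<rceil> + nat \<lceil>b * real n\<rceil>"
  have M: "fst J \<le> M" "snd J \<le> M" if "J \<in> T n" for J
    using triangle_points_subset[OF a b, of n] that unfolding M_def by fastforce+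
  obtain x where x: "\<And>i. i \<le> M \<Longrightarrow> x i \<in> E" "\<And>i. i \<le> M \<Longrightarrow> E.td ^ i \<le> (\<Prod>k<i. cmod (x i - x k))"
    using E.leja_points_td by blast
  obtain y where y: "\<And>i. i \<le> M \<Longrightarrow> y i \<in> F" "\<And>i. i \<le> M \<Longrightarrow> F.td ^ i \<le> (\<Prod>k<i. cmod (y i - y k))"
    using F.leja_points_td by blast
  define \<zeta> where "\<zeta> = (\<lambda>J::nat \<times> nat. (x (fst J), y (snd J)))"
  have \<zeta>: "\<forall>J\<in>T n. \<zeta> J \<in> E \<times> F" using x y M unfolding \<zeta>_def by auto
  have "det_on (T n) (\<lambda>I J. mono2 I (\<zeta> J)) =
        det_on (T n) (\<lambda>I J. poly (newton_poly x (fst I)) (fst (\<zeta> J)) * poly (newton_poly y (snd I)) (snd (\<zeta> J)))"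
    using triangle_points_downward_closed[OF a b]
    by (intro det_on_monic_product_rows[symmetric, OF finite_T]) auto
  also have "\<dots> = (\<Prod>I\<in>T n. poly (newton_poly x (fst I)) (fst (\<zeta> I)) * poly (newton_poly y (snd I)) (snd (\<zeta> I)))"
  proof (rule det_on_triangular[OF finite_T, where rk="\<lambda>K. int (fst K + snd K)"])
    fix I J assume nz: "poly (newton_poly x (fst I)) (fst (\<zeta> J)) * poly (newton_poly y (snd I)) (snd (\<zeta> J)) \<noteq> 0"
      and "I \<noteq> J"
    have "fst I \<le> fst J" "snd I \<le> snd J"
      using nz unfolding poly_newton_poly \<zeta>_def by (force simp: not_le)+
    with \<open>I \<noteq> J\<close> show "int (fst I + snd I) < int (fst J + snd J)" by (cases I, cases J) auto
  qed
  finally have "cmod (det_on (T n) (\<lambda>I J. mono2 I (\<zeta> J))) =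
      (\<Prod>I\<in>T n. (\<Prod>k<fst I. cmod (x (fst I) - x k)) * (\<Prod>k<snd I. cmod (y (snd I) - y k)))"
    unfolding \<zeta>_def poly_newton_poly by (simp add: prod_norm[symmetric] norm_mult)
  also have "\<dots> \<ge> (\<Prod>I\<in>T n. E.td ^ fst I * F.td ^ snd I)"
    using x y M E.td_nonneg F.td_nonneg by (intro prod_mono conjI mult_mono) (auto intro: prod_nonneg)
  also have "(\<Prod>I\<in>T n. E.td ^ fst I * F.td ^ snd I) = E.td ^ fst_sum a b n * F.td ^ snd_sum a b n"
    unfolding fst_sum_def snd_sum_def power_sum prod.distrib ..
  finally have "E.td ^ fst_sum a b n * F.td ^ snd_sum a b n \<le> cmod (det_on (T n) (\<lambda>I J. mono2 I (\<zeta> J)))" .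
  also have "\<dots> \<le> Vn (triangle a b) (E \<times> F) n"
  proof -
    obtain K where K: "1 \<le> K" "\<And>n \<zeta>. \<forall>J\<in>T n. \<zeta> J \<in> E \<times> F \<Longrightarrow>
       cmod (det_on (T n) (\<lambda>I J. mono2 I (\<zeta> J))) \<le>
         fact (card (T n)) * K ^ card (T n) * (E.td + 1) ^ fst_sum a b n * (F.td + 1) ^ snd_sum a b n"
      using norm_det_le[OF zero_less_one] by blast
    have "0 \<le> E.td + 1" "0 \<le> F.td + 1" using E.td_nonneg F.td_nonneg by auto
    then show ?thesis
      unfolding Vn_eq_Sup using \<zeta> K
      by (intro cSup_upper bdd_aboveI[where M="fact (card (T n)) * K ^ card (T n)
          * (E.td + 1) ^ fst_sum a b n * (F.td + 1) ^ snd_sum a b n"]) auto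
  qed
  finally show ?thesis .
qed

end

section \<open>Asymptotics of the exponent sums\<close>

lemma card_nat_mult_le:
  fixes b R :: real
  assumes b: "0 < b" and R: "0 \<le> R"
  shows "real (card {j::nat. b * real j \<le> R}) = of_int \<lfloor>R / b\<rfloor> + 1"
proof -
  have "0 \<le> \<lfloor>R / b\<rfloor>" using b R by simp
  have "b * real j \<le> R \<longleftrightarrow> j \<le> nat \<lfloor>R / b\<rfloor>" for j
  proof -
    have "b * real j \<le> R \<longleftrightarrow> real j \<le> R / b" using b by (simp add: field_simps)
    also have "\<dots> \<longleftrightarrow> int j \<le> \<lfloor>R / b\<rfloor>" by (simp add: le_floor_iff)
    also have "\<dots> \<longleftrightarrow> j \<le> nat \<lfloor>R / b\<rfloor>" using \<open>0 \<le> \<lfloor>R / b\<rfloor>\<close> by linarith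
    finally show ?thesis .
  qed
  then have "{j::nat. b * real j \<le> R} = {..nat \<lfloor>R / b\<rfloor>}" by auto
  then show ?thesis using \<open>0 \<le> \<lfloor>R / b\<rfloor>\<close> by simp
qed

text \<open>Summing column by column: column \<open>i \<le> \<lfloor>b n\<rfloor>\<close> of \<open>n T\<^sub>a\<^sub>,\<^sub>b\<close> contains
  \<open>\<lfloor>a n - a i / b\<rfloor> + 1\<close> lattice points.\<close>

lemma fst_sum_bounds:
  fixes n :: nat
  assumes a: "0 < a" and b: "0 < b"
  defines "K \<equiv> nat \<lfloor>b * real n\<rfloor>"
  shows "(\<Sum>i\<le>K. real i * (a * real n - a * real i / b)) \<le> real (fst_sum a b n)"
    and "real (fst_sum a b n) \<le> (\<Sum>i\<le>K. real i * (a * real n - a * real i / b + 1))"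
proof -
  define col where "col i = {j::nat. b * real j \<le> a * b * real n - a * real i}" for i
  have K_iff: "a * real i \<le> a * b * real n \<longleftrightarrow> i \<le> K" for i
  proof -
    have "a * real i \<le> a * b * real n \<longleftrightarrow> real i \<le> b * real n" using a by (simp add: mult.assoc)
    also have "\<dots> \<longleftrightarrow> int i \<le> \<lfloor>b * real n\<rfloor>" by (simp add: le_floor_iff)
    also have "\<dots> \<longleftrightarrow> i \<le> K"
      unfolding K_def using b zero_le_floor[of "b * real n"] by (simp add: le_nat_iff)
    finally show ?thesis .
  qed
  have tri: "triangle_points a b n = Sigma {..K} col"
  proof (intro set_eqI iffI)
    fix J assume J: "J \<in> triangle_points a b n"
    moreover have "0 \<le> b * real (snd J)" using b by simp
    ultimately have "a * real (fst J) \<le> a * b * real n"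
      unfolding triangle_points_def by simp
    then show "J \<in> Sigma {..K} col" using J K_iff unfolding triangle_points_def col_def by (cases J) auto
  qed (auto simp: triangle_points_def col_def)
  have "finite (col i)" for i
  proof (rule finite_subset)
    show "col i \<subseteq> snd ` triangle_points a b n"
    proof
      fix j assume "j \<in> col i"
      then have "(i, j) \<in> triangle_points a b n" by (simp add: col_def triangle_points_def)
      then show "j \<in> snd ` triangle_points a b n" by force
    qed
  qed (simp add: finite_triangle_points[OF a b])
  then have "(\<Sum>i\<le>K. \<Sum>j\<in>col i. i) = (\<Sum>(i, j)\<in>Sigma {..K} col. i)"
    by (intro sum.Sigma) auto
  then have "fst_sum a b n = (\<Sum>i\<le>K. \<Sum>j\<in>col i. i)"
    unfolding fst_sum_def tri by (simp add: case_prod_unfold)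
  then have "real (fst_sum a b n) = (\<Sum>i\<le>K. real i * real (card (col i)))"
    by (simp add: mult.commute)
  moreover have "a * real n - a * real i / b \<le> real (card (col i))"
    "real (card (col i)) \<le> a * real n - a * real i / b + 1" if "i \<le> K" for i
  proof -
    have "0 \<le> a * b * real n - a * real i" using K_iff that by simp
    moreover have "(a * b * real n - a * real i) / b = a * real n - a * real i / b"
      using b by (simp add: field_simps)
    ultimately have "real (card (col i)) = of_int \<lfloor>a * real n - a * real i / b\<rfloor> + 1"
      unfolding col_def using card_nat_mult_le[OF b] by simp
    then show "a * real n - a * real i / b \<le> real (card (col i))"
      "real (card (col i)) \<le> a * real n - a * real i / b + 1" by linarith+
  qed
  ultimately show "(\<Sum>i\<le>K. real i * (a * real n - a * real i / b)) \<le> real (fst_sum a b n)"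
    "real (fst_sum a b n) \<le> (\<Sum>i\<le>K. real i * (a * real n - a * real i / b + 1))"
    by (auto intro!: sum_mono mult_left_mono)
qed

lemma tendsto_nat_floor_mult_over_n:
  fixes b :: real
  assumes b: "0 \<le> b"
  shows "(\<lambda>n. real (nat \<lfloor>b * real n\<rfloor>) / real n) \<longlonglongrightarrow> b"
proof (rule real_tendsto_sandwich[where f="\<lambda>n. b - 1 / real n" and h="\<lambda>n. b"])
  have "b - 1 / real n \<le> real (nat \<lfloor>b * real n\<rfloor>) / real n \<and> real (nat \<lfloor>b * real n\<rfloor>) / real n \<le> b"
    if "0 < n" for n
  proof
    have n: "0 < real n" using that by simp
    have K: "real (nat \<lfloor>b * real n\<rfloor>) = of_int \<lfloor>b * real n\<rfloor>" using b by simp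
    have "b - 1 / real n = (b * real n - 1) / real n" using n by (simp add: field_simps)
    also have "\<dots> \<le> real (nat \<lfloor>b * real n\<rfloor>) / real n"
      unfolding K using n real_of_int_floor_add_one_gt[of "b * real n"]
      by (intro divide_right_mono) auto
    finally show "b - 1 / real n \<le> real (nat \<lfloor>b * real n\<rfloor>) / real n" .
    have "real (nat \<lfloor>b * real n\<rfloor>) / real n \<le> b * real n / real n"
      unfolding K using n by (intro divide_right_mono) auto
    then show "real (nat \<lfloor>b * real n\<rfloor>) / real n \<le> b" using n by simp
  qed
  then show "eventually (\<lambda>n. b - 1 / real n \<le> real (nat \<lfloor>b * real n\<rfloor>) / real n) sequentially"
    "eventually (\<lambda>n. real (nat \<lfloor>b * real n\<rfloor>) / real n \<le> b) sequentially"
    by (intro eventually_mono[OF eventually_gt_at_top[of 0]]; blast)+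
  show "(\<lambda>n. b - 1 / real n) \<longlonglongrightarrow> b" by real_asymp
qed simp

lemma column_sums_closed_form:
  fixes N x h a b :: real
  assumes N: "N \<noteq> 0" and b: "b \<noteq> 0" and K: "real K = x * N" and h: "h * N = 1"
  shows "(\<Sum>i\<le>K. real i * (a * N - a * real i / b)) / N ^ 3
      = a / 2 * x * (x + h) - a / (6 * b) * x * (x + h) * (2 * x + h)"
    and "(\<Sum>i\<le>K. real i) / N ^ 3 = x * (x + h) * h / 2"
proof -
  have s1: "(\<Sum>i\<le>m. real i) = real m * (real m + 1) / 2" for m
    by (induction m) (auto simp: field_simps)
  have s2: "(\<Sum>i\<le>m. real i ^ 2) = real m * (real m + 1) * (2 * real m + 1) / 6" for m
    by (induction m) (auto simp: field_simps power2_eq_square)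
  have K1: "x * N + 1 = (x + h) * N" and K2: "2 * (x * N) + 1 = (2 * x + h) * N"
    using h by (simp_all add: algebra_simps)
  have "(\<Sum>i\<le>K. real i * (a * N - a * real i / b))
      = a * N * (\<Sum>i\<le>K. real i) - a / b * (\<Sum>i\<le>K. real i ^ 2)"
    by (simp add: sum_subtractf sum_distrib_left algebra_simps power2_eq_square)
  also have "\<dots> = a * N * (x * N * ((x + h) * N) / 2) - a / b * (x * N * ((x + h) * N) * ((2 * x + h) * N) / 6)"
    unfolding s1 s2 K K1 K2 ..
  finally show "(\<Sum>i\<le>K. real i * (a * N - a * real i / b)) / N ^ 3
      = a / 2 * x * (x + h) - a / (6 * b) * x * (x + h) * (2 * x + h)"
    using N b by (simp add: field_simps power3_eq_cube)
  show "(\<Sum>i\<le>K. real i) / N ^ 3 = x * (x + h) * h / 2"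
  proof -
    have hN: "h = 1 / N" using h N by (simp add: field_simps)
    show ?thesis unfolding s1 K K1 hN using N by (simp add: field_simps power3_eq_cube)
  qed
qed

lemma fst_sum_asymp:
  assumes a: "0 < a" and b: "0 < b"
  shows "(\<lambda>n. real (fst_sum a b n) / real n ^ 3) \<longlonglongrightarrow> a * b ^ 2 / 6"
proof -
  define K where "K n = nat \<lfloor>b * real n\<rfloor>" for n
  define k where "k n = real (K n) / real n" for n
  define h where "h n = 1 / real n" for n :: nat
  have h: "h \<longlonglongrightarrow> 0" unfolding h_def by real_asymp
  have k: "k \<longlonglongrightarrow> b" unfolding k_def K_def using b by (intro tendsto_nat_floor_mult_over_n) simp
  define Lo where "Lo n = a / 2 * k n * (k n + h n) - a / (6 * b) * k n * (k n + h n) * (2 * k n + h n)" for n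
  define Ex where "Ex n = k n * (k n + h n) * h n / 2" for n
  have val: "a / 2 * b * (b + 0) - a / (6 * b) * b * (b + 0) * (2 * b + 0) = a * b ^ 2 / 6"
    using b by (simp add: field_simps power2_eq_square)
  have "Lo \<longlonglongrightarrow> a / 2 * b * (b + 0) - a / (6 * b) * b * (b + 0) * (2 * b + 0)"
    unfolding Lo_def by (intro tendsto_intros k h)
  then have Lo: "Lo \<longlonglongrightarrow> a * b ^ 2 / 6" unfolding val .
  have "Ex \<longlonglongrightarrow> b * (b + 0) * 0 / 2" unfolding Ex_def by (intro tendsto_intros k h) simp
  then have "Ex \<longlonglongrightarrow> 0" by simp
  then have LoEx: "(\<lambda>n. Lo n + Ex n) \<longlonglongrightarrow> a * b ^ 2 / 6 + 0" by (rule tendsto_add[OF Lo])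
  have lo: "Lo n \<le> real (fst_sum a b n) / real n ^ 3"
    and hi: "real (fst_sum a b n) / real n ^ 3 \<le> Lo n + Ex n" if "1 \<le> n" for n
  proof -
    have "real n \<noteq> 0" "b \<noteq> 0" "real (K n) = k n * real n" "h n * real n = 1"
      using that b by (simp_all add: k_def h_def)
    note closed = column_sums_closed_form[OF this]
    note bounds = fst_sum_bounds[OF a b, of n, folded K_def]
    have "(\<Sum>i\<le>K n. real i * (a * real n - a * real i / b + 1))
        = (\<Sum>i\<le>K n. real i * (a * real n - a * real i / b)) + (\<Sum>i\<le>K n. real i)"
      by (simp add: distrib_left sum.distrib)
    then show "Lo n \<le> real (fst_sum a b n) / real n ^ 3"
      "real (fst_sum a b n) / real n ^ 3 \<le> Lo n + Ex n"
      using divide_right_mono[OF bounds(1), of "real n ^ 3"] divide_right_mono[OF bounds(2), of "real n ^ 3"]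
        closed by (simp_all add: add_divide_distrib Lo_def Ex_def)
  qed
  have "eventually (\<lambda>n. Lo n \<le> real (fst_sum a b n) / real n ^ 3) sequentially"
    by (rule eventually_mono[OF eventually_ge_at_top[of 1] lo])
  moreover have "eventually (\<lambda>n. real (fst_sum a b n) / real n ^ 3 \<le> Lo n + Ex n) sequentially"
    by (rule eventually_mono[OF eventually_ge_at_top[of 1] hi])
  ultimately show ?thesis using real_tendsto_sandwich[OF _ _ Lo] LoEx by simp
qed

lemma snd_sum_eq_fst_sum: "snd_sum a b n = fst_sum b a n"
proof -
  have "triangle_points b a n = prod.swap ` triangle_points a b n"
    by (force simp: triangle_points_def algebra_simps image_iff)
  then show ?thesis
    unfolding snd_sum_def fst_sum_def by (simp add: sum.reindex)
qed

lemma card_triangle_points_le: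
  assumes a: "0 < a" and b: "0 < b"
  shows "real (card (triangle_points a b n)) \<le> (b * real n + 2) * (a * real n + 2)"
proof -
  have "card (triangle_points a b n) \<le> card ({..nat \<lceil>b * real n\<rceil>} \<times> {..nat \<lceil>a * real n\<rceil>})"
    by (rule card_mono) (use triangle_points_subset[OF a b] in auto)
  also have "\<dots> = (nat \<lceil>b * real n\<rceil> + 1) * (nat \<lceil>a * real n\<rceil> + 1)"
    by (simp add: card_cartesian_product)
  finally have "real (card (triangle_points a b n))
      \<le> real ((nat \<lceil>b * real n\<rceil> + 1) * (nat \<lceil>a * real n\<rceil> + 1))"
    by (rule of_nat_mono)
  also have "\<dots> = (real (nat \<lceil>b * real n\<rceil>) + 1) * (real (nat \<lceil>a * real n\<rceil>) + 1)"
    by (simp only: of_nat_mult of_nat_add of_nat_1)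
  also have "\<dots> \<le> (b * real n + 2) * (a * real n + 2)"
  proof (rule mult_mono)
    have ceil: "real (nat \<lceil>x\<rceil>) \<le> x + 1" if "0 \<le> x" for x :: real
      using that of_int_ceiling_le_add_one[of x] by simp
    have nb: "0 \<le> b * real n" and na: "0 \<le> a * real n" using a b by simp_all
    show "real (nat \<lceil>b * real n\<rceil>) + 1 \<le> b * real n + 2" using ceil[OF nb] by linarith
    show "real (nat \<lceil>a * real n\<rceil>) + 1 \<le> a * real n + 2" using ceil[OF na] by linarith
  qed (use b in auto)
  finally show ?thesis .
qed

lemma pow_powr_inverse: "0 < q \<Longrightarrow> (q ^ k) powr (1 / L) = q powr (real k / L)"
  by (simp add: powr_realpow[symmetric] powr_powr)

context compact_product
begin

abbreviation l :: "nat \<Rightarrow> nat" where "l n \<equiv> fst_sum a b n + snd_sum a b n"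

lemma l_asymp: "(\<lambda>n. real (l n) / real n ^ 3) \<longlonglongrightarrow> a * b * (a + b) / 6"
proof -
  have "(\<lambda>n. real (fst_sum a b n) / real n ^ 3 + real (snd_sum a b n) / real n ^ 3)
      \<longlonglongrightarrow> a * b ^ 2 / 6 + b * a ^ 2 / 6"
    unfolding snd_sum_eq_fst_sum by (intro tendsto_add fst_sum_asymp a b)
  then show ?thesis by (simp add: add_divide_distrib algebra_simps power2_eq_square)
qed

lemma eventually_l_pos: "eventually (\<lambda>n. 0 < l n) sequentially"
proof -
  have "eventually (\<lambda>n. 0 < real (l n) / real n ^ 3) sequentially"
    using a b by (intro order_tendstoD(1)[OF l_asymp]) simp
  then show ?thesis by eventually_elim (auto simp: zero_less_divide_iff)
qed

lemma fst_sum_ratio: "(\<lambda>n. real (fst_sum a b n) / real (l n)) \<longlonglongrightarrow> b / (a + b)"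
proof -
  have lim: "(\<lambda>n. (real (fst_sum a b n) / real n ^ 3) / (real (l n) / real n ^ 3))
      \<longlonglongrightarrow> (a * b ^ 2 / 6) / (a * b * (a + b) / 6)"
    using a b by (intro tendsto_divide fst_sum_asymp l_asymp) auto
  have val: "(a * b ^ 2 / 6) / (a * b * (a + b) / 6) = b / (a + b)"
  proof -
    have "a * b * (a + b) \<noteq> 0" "a + b \<noteq> 0" using a b by auto
    then show ?thesis by (subst frac_eq_eq) (auto simp: power2_eq_square algebra_simps)
  qed
  have "eventually (\<lambda>n. (real (fst_sum a b n) / real n ^ 3) / (real (l n) / real n ^ 3)
      = real (fst_sum a b n) / real (l n)) sequentially"
    using eventually_gt_at_top[of 0] by eventually_elim simp
  from Lim_transform_eventually[OF lim[unfolded val] this] show ?thesis .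
qed

lemma snd_sum_ratio: "(\<lambda>n. real (snd_sum a b n) / real (l n)) \<longlonglongrightarrow> a / (a + b)"
proof -
  have lim: "(\<lambda>n. 1 - real (fst_sum a b n) / real (l n)) \<longlonglongrightarrow> 1 - b / (a + b)"
    by (intro tendsto_intros fst_sum_ratio)
  have val: "1 - b / (a + b) = a / (a + b)" using a b by (simp add: field_simps)
  have "eventually (\<lambda>n. 1 - real (fst_sum a b n) / real (l n)
      = real (snd_sum a b n) / real (l n)) sequentially"
    using eventually_l_pos
  proof eventually_elim
    case (elim n)
    then have "real (l n) \<noteq> 0" by linarith
    then show ?case by (simp add: field_simps)
  qed
  from Lim_transform_eventually[OF lim[unfolded val] this] show ?thesis .
qed

text \<open>The factorial and the constant in the upper bound only involve \<open>card (T n) = O(n\<^sup>2)\<close>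
  factors, which are negligible against \<open>l n \<sim> c n\<^sup>3\<close>.\<close>

lemma ln_fact_card_negligible:
  assumes K: "1 \<le> K"
  shows "(\<lambda>n. ln (fact (card (T n)) * K ^ card (T n)) / real (l n)) \<longlonglongrightarrow> 0"
proof -
  have C: "1 \<le> fact (card (T n)) * K ^ card (T n)" for n
    using mult_mono[OF fact_ge_1 one_le_power[OF K], of "card (T n)" "card (T n)"] by simp
  define D where "D n = (b * real n + 2) * (a * real n + 2)" for n :: nat
  define X where "X n = (D n * ln (D n) + D n * ln K) / real n ^ 3" for n
  have "X \<longlonglongrightarrow> 0" unfolding X_def D_def using a b K by real_asymp
  then have "(\<lambda>n. X n / (real (l n) / real n ^ 3)) \<longlonglongrightarrow> 0 / (a * b * (a + b) / 6)"
    using a b by (intro tendsto_divide l_asymp) auto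
  then have X: "(\<lambda>n. X n / (real (l n) / real n ^ 3)) \<longlonglongrightarrow> 0" by simp
  show ?thesis
  proof (rule real_tendsto_sandwich[OF _ _ tendsto_const X])
    show "eventually (\<lambda>n. 0 \<le> ln (fact (card (T n)) * K ^ card (T n)) / real (l n)) sequentially"
      using C by (intro always_eventually allI divide_nonneg_nonneg ln_ge_zero) auto
    show "eventually (\<lambda>n. ln (fact (card (T n)) * K ^ card (T n)) / real (l n)
        \<le> X n / (real (l n) / real n ^ 3)) sequentially"
      using eventually_l_pos eventually_gt_at_top[of 0]
    proof eventually_elim
      case (elim n)
      define d where "d = real (card (T n))"
      have d: "1 \<le> d" "d \<le> D n"
        using zero_in_triangle_points[OF a b] finite_T card_triangle_points_le[OF a b]
        by (auto simp: d_def D_def Suc_le_eq card_gt_0_iff)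
      have "ln (fact (card (T n)) * K ^ card (T n)) = ln (fact (card (T n))) + d * ln K"
        using K by (simp add: ln_mult ln_realpow d_def)
      also have "ln (fact (card (T n))) \<le> d * ln d"
      proof -
        have "fact (card (T n)) \<le> (real (card (T n) ^ card (T n)))" by (rule fact_le_power)
        then have "ln (fact (card (T n))) \<le> ln (real (card (T n)) ^ card (T n))"
          by (subst ln_le_cancel_iff) auto
        then show ?thesis by (simp add: ln_realpow d_def)
      qed
      also have "d * ln d + d * ln K \<le> D n * ln (D n) + D n * ln K"
        using d K by (intro add_mono mult_mono mult_right_mono) auto
      finally have "ln (fact (card (T n)) * K ^ card (T n)) \<le> D n * ln (D n) + D n * ln K"
        by simp
      then show ?case using elim by (simp add: X_def divide_right_mono)
    qed
  qed
qed

abbreviation root_Vn :: "nat \<Rightarrow> real" where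
  "root_Vn n \<equiv> Vn (triangle a b) (E \<times> F) n powr (1 / real (ln_sum (triangle a b) n))"

lemma Vn_nonneg: "0 \<le> Vn (triangle a b) (E \<times> F) n"
  using Vn_ge[of n] E.td_nonneg F.td_nonneg by (meson order_trans zero_le_mult_iff zero_le_power)

lemma limsup_root_Vn_le:
  assumes "0 < \<epsilon>"
  shows "limsup (\<lambda>n. ereal (root_Vn n))
    \<le> ereal ((E.td + \<epsilon>) powr (b / (a + b)) * (F.td + \<epsilon>) powr (a / (a + b)))"
proof -
  obtain K where K: "1 \<le> K" "\<And>n. Vn (triangle a b) (E \<times> F) n \<le>
       fact (card (T n)) * K ^ card (T n) * (E.td + \<epsilon>) ^ fst_sum a b n * (F.td + \<epsilon>) ^ snd_sum a b n"
    using Vn_le[OF assms] by blast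
  define q1 where "q1 = E.td + \<epsilon>"
  define q2 where "q2 = F.td + \<epsilon>"
  have q: "0 < q1" "0 < q2" using E.td_nonneg F.td_nonneg assms by (simp_all add: q1_def q2_def)
  define err where "err n = ln (fact (card (T n)) * K ^ card (T n)) / real (l n)" for n
  let ?bound = "\<lambda>n. exp (err n) * q1 powr (real (fst_sum a b n) / real (l n))
                  * q2 powr (real (snd_sum a b n) / real (l n))"
  have "eventually (\<lambda>n. root_Vn n \<le> ?bound n) sequentially"
    using eventually_l_pos
  proof eventually_elim
    case (elim n)
    let ?C = "fact (card (T n)) * K ^ card (T n)"
    have "0 < ?C" using K by simp
    have "root_Vn n \<le> (?C * q1 ^ fst_sum a b n * q2 ^ snd_sum a b n) powr (1 / real (l n))"
      unfolding ln_sum_triangle[OF a b] using K(2)[of n] Vn_nonneg elim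
      by (intro powr_mono2) (simp_all add: q1_def q2_def)
    also have "\<dots> = ?C powr (1 / real (l n)) * (q1 ^ fst_sum a b n) powr (1 / real (l n))
        * (q2 ^ snd_sum a b n) powr (1 / real (l n))"
      using \<open>0 < ?C\<close> q by (simp add: powr_mult)
    also have "?C powr (1 / real (l n)) = exp (err n)"
      using \<open>0 < ?C\<close> K(1) by (simp add: powr_def err_def)
    finally show ?case using q by (simp add: pow_powr_inverse)
  qed
  then have "limsup (\<lambda>n. ereal (root_Vn n)) \<le> limsup (\<lambda>n. ereal (?bound n))"
    by (intro Limsup_mono) (simp add: eventually_mono)
  also have "?bound \<longlonglongrightarrow> exp 0 * q1 powr (b / (a + b)) * q2 powr (a / (a + b))"
    unfolding err_def using q
    by (intro tendsto_intros ln_fact_card_negligible[OF K(1)] fst_sum_ratio snd_sum_ratio) auto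
  then have "limsup (\<lambda>n. ereal (?bound n)) = ereal (q1 powr (b / (a + b)) * q2 powr (a / (a + b)))"
    by (intro lim_imp_Limsup) (auto intro: tendsto_ereal)
  finally show ?thesis by (simp add: q1_def q2_def)
qed

lemma liminf_root_Vn_ge:
  "ereal (E.td powr (b / (a + b)) * F.td powr (a / (a + b))) \<le> liminf (\<lambda>n. ereal (root_Vn n))"
proof (cases "E.td = 0 \<or> F.td = 0")
  case True
  then show ?thesis by (auto intro: Liminf_bounded)
next
  case False
  then have td: "0 < E.td" "0 < F.td" using E.td_nonneg F.td_nonneg by auto
  let ?bound = "\<lambda>n. E.td powr (real (fst_sum a b n) / real (l n)) * F.td powr (real (snd_sum a b n) / real (l n))"
  have "eventually (\<lambda>n. ?bound n \<le> root_Vn n) sequentially"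
    using eventually_l_pos
  proof eventually_elim
    case (elim n)
    have "?bound n = (E.td ^ fst_sum a b n * F.td ^ snd_sum a b n) powr (1 / real (l n))"
      using td by (simp add: powr_mult pow_powr_inverse)
    also have "\<dots> \<le> root_Vn n"
      unfolding ln_sum_triangle[OF a b] using Vn_ge td by (intro powr_mono2) auto
    finally show ?case .
  qed
  have "?bound \<longlonglongrightarrow> E.td powr (b / (a + b)) * F.td powr (a / (a + b))"
    using td by (intro tendsto_intros fst_sum_ratio snd_sum_ratio) auto
  then have "ereal (E.td powr (b / (a + b)) * F.td powr (a / (a + b))) = liminf (\<lambda>n. ereal (?bound n))"
    by (intro lim_imp_Liminf[symmetric]) (auto intro: tendsto_ereal)
  also have "\<dots> \<le> liminf (\<lambda>n. ereal (root_Vn n))"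
    using \<open>eventually (\<lambda>n. ?bound n \<le> root_Vn n) sequentially\<close>
    by (intro Liminf_mono) (simp add: eventually_mono)
  finally show ?thesis .
qed

lemma delta_C_eq: "delta_C (triangle a b) (E \<times> F) = E.td powr (b / (a + b)) * F.td powr (a / (a + b))"
proof -
  let ?L = "E.td powr (b / (a + b)) * F.td powr (a / (a + b))"
  define f where "f k = (E.td + 1 / real (Suc k)) powr (b / (a + b)) * (F.td + 1 / real (Suc k)) powr (a / (a + b))" for k
  have e: "(\<lambda>k. 1 / real (Suc k)) \<longlonglongrightarrow> 0" by (rule LIMSEQ_Suc[OF lim_inverse_n'])
  have "(\<lambda>k. E.td + 1 / real (Suc k)) \<longlonglongrightarrow> E.td + 0" "(\<lambda>k. F.td + 1 / real (Suc k)) \<longlonglongrightarrow> F.td + 0"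
    by (intro tendsto_intros e)+
  then have "f \<longlonglongrightarrow> ?L"
    unfolding f_def using a b E.td_nonneg F.td_nonneg by (intro tendsto_mult tendsto_powr') auto
  then have "(\<lambda>k. ereal (f k)) \<longlonglongrightarrow> ereal ?L" by (rule tendsto_ereal)
  then have "limsup (\<lambda>n. ereal (root_Vn n)) \<le> ereal ?L"
    by (rule LIMSEQ_le_const) (use limsup_root_Vn_le[of "1 / real (Suc _)"] in \<open>auto simp: f_def\<close>)
  moreover have "ereal ?L \<le> liminf (\<lambda>n. ereal (root_Vn n))" by (rule liminf_root_Vn_ge)
  moreover have "\<dots> \<le> limsup (\<lambda>n. ereal (root_Vn n))" by (rule Liminf_le_Limsup) simp
  ultimately have "limsup (\<lambda>n. ereal (root_Vn n)) = ereal ?L" by (meson antisym order_trans)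
  then show ?thesis unfolding delta_C_def by simp
qed

end

lemma transfinite_diameter_empty: "transfinite_diameter {} = 0"
proof -
  have V: "fekete_V {} n = 0" if "1 \<le> n" for n
  proof -
    have S: "{(\<Prod>i<n. \<Prod>j\<in>{i<..<n}. cmod (z i - z j)) | z. \<forall>i<n. z i \<in> ({} :: complex set)} = {}"
      using that by (fastforce simp: Suc_le_eq)
    show ?thesis unfolding fekete_V_def S by simp
  qed
  have "eventually (\<lambda>n. ereal (nth_diameter {} n) = ereal 0) sequentially"
    using eventually_ge_at_top[of 1] by eventually_elim (simp add: nth_diameter_def V)
  then have "limsup (\<lambda>n. ereal (nth_diameter {} n)) = limsup (\<lambda>n. ereal 0)"
    by (rule Limsup_eq)
  then show ?thesis by (simp add: transfinite_diameter_eq_limsup Limsup_const)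
qed

lemma delta_C_triangle_empty:
  assumes "0 < a" "0 < b"
  shows "delta_C (triangle a b) {} = 0"
proof -
  have "Vn (triangle a b) {} n = 0" for n
  proof -
    have S: "{cmod (det_on (exps (triangle a b) n) (\<lambda>I J. mono2 I (\<zeta> J))) | \<zeta>.
        \<forall>J\<in>exps (triangle a b) n. \<zeta> J \<in> {}} = {}"
      using zero_in_triangle_points[OF assms, of n] unfolding exps_triangle[OF assms] by blast
    show ?thesis unfolding Vn_def S by simp
  qed
  then show ?thesis by (simp add: delta_C_def Limsup_const)
qed

theorem theorem4p1:
  fixes E F :: "complex set" and a b :: real
  assumes "compact E" and "compact F" and "a > 0" and "b > 0"
  shows "delta_C (triangle a b) (E \<times> F) =
           transfinite_diameter E powr (b / (a + b)) * transfinite_diameter F powr (a / (a + b))"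
proof (cases "E = {} \<or> F = {}")
  case False
  then interpret compact_product E F a b
    using assms by unfold_locales auto
  show ?thesis by (rule delta_C_eq)
next
  case True
  then show ?thesis using assms delta_C_triangle_empty transfinite_diameter_empty by auto
qed
end
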